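(* Let $f:\mathbb{R}^{3}\to\mathbb{R}$ be normal, and for $k_{1},k_{2},k_{3}\neq0$ let $A(k_{1},y,z)=\lim_{r\to\infty}\int_{-r}^{r}f(x,y,z)e^{-ik_{1}x}dx$, $B(x,k_{2},z)=\lim_{r\to\infty}\int_{-r}^{r}f(x,y,z)e^{-ik_{2}y}dy$, $C(x,y,k_{3})=\lim_{r\to\infty}\int_{-r}^{r}f(x,y,z)e^{-ik_{3}z}dz$, $F(k_{1},k_{2},z)=\lim_{r,s\to\infty}\int_{-r}^{r}\int_{-s}^{s}f(x,y,z)e^{-ik_{1}x}e^{-ik_{2}y}dxdy$, $G(k_{1},y,k_{3})=\lim_{r,s\to\infty}\int_{-r}^{r}\int_{-s}^{s}f(x,y,z)e^{-ik_{1}x}e^{-ik_{3}z}dxdz$, $H(x,k_{2},k_{3})=\lim_{r,s\to\infty}\int_{-r}^{r}\int_{-s}^{s}f(x,y,z)e^{-ik_{2}y}e^{-ik_{3}z}dydz$. Then for $k_{1},k_{2},k_{3}\neq0$ the integrals $A(k_{1},k_{2},k_{3})=\int\!\!\int A(k_{1},y,z)e^{-ik_{2}y}e^{-ik_{3}z}dydz$, $B(k_{1},k_{2},k_{3})=\int\!\!\int B(x,k_{2},z)e^{-ik_{1}x}e^{-ik_{3}z}dxdz$, $C(k_{1},k_{2},k_{3})=\int\!\!\int C(x,y,k_{3})e^{-ik_{1}x}e^{-ik_{2}y}dxdy$, $F(k_{1},k_{2},k_{3})=\int F(k_{1},k_{2},z)e^{-ik_{3}z}dz$, $G(k_{1},k_{2},k_{3})=\int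 G(k_{1},y,k_{3})e^{-ik_{2}y}dy$, $H(k_{1},k_{2},k_{3})=\int H(x,k_{2},k_{3})e^{-ik_{1}x}dx$ (all over the whole real line / plane) are well defined, and $A=B=C=F=G=H$ at $(k_{1},k_{2},k_{3})$, with common value $\lim_{r,s,t\to\infty}\int_{-r}^{r}\int_{-s}^{s}\int_{-t}^{t}f(x,y,z)e^{-ik_{1}x}e^{-ik_{2}y}e^{-ik_{3}z}\,dx\,dy\,dz$.
   Context: One-variable: a smooth $g:\mathbb{R}\setminus V\to\mathbb{R}$, $V$ bounded closed, is analytic at infinity if there exist $\epsilon_{1},\epsilon_{2}>0$ with $g(1/t)=\sum_{n\geq1}a_{n}t^{n}$ on $(0,\epsilon_{1})$ and $g(1/t)=\sum_{n\geq1}b_{n}t^{n}$ on $(-\epsilon_{2},0)$, real coefficients, both series absolutely convergent there. Two variables: for smooth $h:\mathbb{R}^{2}\setminus W\to\mathbb{R}$, $W$ closed bounded: very moderate decrease means $|h(u,v)|\leq C/|(u,v)|$ for $|(u,v)|>1$; moderate decrease means $|h|\leq C/|(u,v)|^{2}$ for $|(u,v)|>1$. With fibres $h_{u}(v)=h(u,v)$, $h_{v}(u)=h(u,v)$, $h$ is normal if (i) every $h_{u}$ is analytic at infinity; (ii) every $h_{v}$ is analytic at infinity; (iii) $h$ is of very moderate decrease; (iv) $\partial h/\partial u$, $\partial h/\partial v$ are of moderate decrease; (v) there is a uniform bound on the number of zeros of $h_{u},(h_{u})',(h_{u})'',h_{v},(h_{v})',(h_{v})''$. Three variables: smooth $f:\mathbb{R}^{3}\to\mathbb{R}$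 is of very moderate decrease if $|f(x,y,z)|\leq C/|(x,y,z)|$ for $|(x,y,z)|>1$, of moderate decrease $n$ ($n\geq2$) if $|f|\leq C/|(x,y,z)|^{n}$ there. Fibres: $f_{x}(y,z)=f(x,y,z)$ etc., and $f_{x,y}(z)=f(x,y,z)$, $f_{x,z}(y)$, $f_{y,z}(x)$ similarly. $f$ is normal if: (i) for every $x$, $f_{x}(y,z)$ is normal; (ii) for every $y$, $f_{y}(x,z)$ is normal; (iii) for every $z$, $f_{z}(x,y)$ is normal; (iv) $f$ is of very moderate decrease; (v) for $i+j+k\geq1$, $\frac{\partial^{i+j+k}f}{\partial x^{i}\partial y^{j}\partial z^{k}}$ is of moderate decrease $i+j+k+1$; (vi) there is a uniform bound on the number of zeros of $f_{x,y}$ and its first four derivatives, and similarly for $f_{x,z}$, $f_{y,z}$. *)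

theory Defs
  imports "HOL-Analysis.Analysis"
begin

text \<open>The Euclidean norm of (u,v) resp. (x,y,z) is norm (u,v) resp. norm (x,y,z)
  on the product types (the product norm is Euclidean).\<close>

definition smooth1_on :: "real set \<Rightarrow> (real \<Rightarrow> real) \<Rightarrow> bool" where
  "smooth1_on U g \<longleftrightarrow> (\<forall>n x. x \<in> U \<longrightarrow> ((deriv ^^ n) g) field_differentiable (at x))"

datatype dir2 = DU | DV

fun pd2 :: "dir2 \<Rightarrow> (real \<Rightarrow> real \<Rightarrow> real) \<Rightarrow> (real \<Rightarrow> real \<Rightarrow> real)" where
  "pd2 DU h = (\<lambda>u v. deriv (\<lambda>t. h t v) u)"
| "pd2 DV h = (\<lambda>u v. deriv (\<lambda>t. h u t) v)"

definition smooth2_on :: "(real \<times> real) set \<Rightarrow> (real \<Rightarrow> real \<Rightarrow> real) \<Rightarrow> bool" where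
  "smooth2_on U h \<longleftrightarrow> open U \<and> (\<forall>ds. let g = foldr pd2 ds h in
      continuous_on U (\<lambda>p. g (fst p) (snd p)) \<and>
      (\<forall>u v. (u, v) \<in> U \<longrightarrow> (\<lambda>t. g t v) field_differentiable (at u)
                          \<and> (\<lambda>t. g u t) field_differentiable (at v)))"

datatype dir3 = DX | DY | DZ

fun pd3 :: "dir3 \<Rightarrow> (real \<Rightarrow> real \<Rightarrow> real \<Rightarrow> real) \<Rightarrow> (real \<Rightarrow> real \<Rightarrow> real \<Rightarrow> real)" where
  "pd3 DX f = (\<lambda>x y z. deriv (\<lambda>t. f t y z) x)"
| "pd3 DY f = (\<lambda>x y z. deriv (\<lambda>t. f x t z) y)"
| "pd3 DZ f = (\<lambda>x y z. deriv (\<lambda>t. f x y t) z)"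

definition smooth3 :: "(real \<Rightarrow> real \<Rightarrow> real \<Rightarrow> real) \<Rightarrow> bool" where
  "smooth3 f \<longleftrightarrow> (\<forall>ds. let g = foldr pd3 ds f in
      continuous_on UNIV (\<lambda>p. g (fst p) (fst (snd p)) (snd (snd p))) \<and>
      (\<forall>x y z. (\<lambda>t. g t y z) field_differentiable (at x)
             \<and> (\<lambda>t. g x t z) field_differentiable (at y)
             \<and> (\<lambda>t. g x y t) field_differentiable (at z)))"

definition mixed_pd :: "nat \<Rightarrow> nat \<Rightarrow> nat \<Rightarrow> (real \<Rightarrow> real \<Rightarrow> real \<Rightarrow> real) \<Rightarrow> (real \<Rightarrow> real \<Rightarrow> real \<Rightarrow> real)" where
  "mixed_pd i j k f = (pd3 DX ^^ i) ((pd3 DY ^^ j) ((pd3 DZ ^^ k) f))"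

definition analytic_at_infinity :: "real set \<Rightarrow> (real \<Rightarrow> real) \<Rightarrow> bool" where
  "analytic_at_infinity V g \<longleftrightarrow>
     (\<exists>e1 e2 (a :: nat \<Rightarrow> real) (b :: nat \<Rightarrow> real). e1 > 0 \<and> e2 > 0 \<and>
        (\<forall>t. 0 < t \<and> t < e1 \<longrightarrow> 1 / t \<notin> V \<and>
              summable (\<lambda>n. \<bar>a (Suc n) * t ^ Suc n\<bar>) \<and>
              (\<lambda>n. a (Suc n) * t ^ Suc n) sums g (1 / t)) \<and>
        (\<forall>t. - e2 < t \<and> t < 0 \<longrightarrow> 1 / t \<notin> V \<and>
              summable (\<lambda>n. \<bar>b (Suc n) * t ^ Suc n\<bar>) \<and>
              (\<lambda>n. b (Suc n) * t ^ Suc n) sums g (1 / t)))"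

definition normal2 :: "(real \<times> real) set \<Rightarrow> (real \<Rightarrow> real \<Rightarrow> real) \<Rightarrow> bool" where
  "normal2 W h \<longleftrightarrow> closed W \<and> bounded W \<and> smooth2_on (- W) h \<and>
     \<comment> \<open>(i)\<close> (\<forall>u. analytic_at_infinity {v. (u, v) \<in> W} (\<lambda>v. h u v)) \<and>
     \<comment> \<open>(ii)\<close> (\<forall>v. analytic_at_infinity {u. (u, v) \<in> W} (\<lambda>u. h u v)) \<and>
     \<comment> \<open>(iii) very moderate decrease\<close>
     (\<exists>C. \<forall>u v. (u, v) \<notin> W \<and> norm (u, v) > 1 \<longrightarrow> \<bar>h u v\<bar> \<le> C / norm (u, v)) \<and>
     \<comment> \<open>(iv) partial derivatives of moderate decrease\<close>
     (\<exists>C. \<forall>u v. (u, v) \<notin> W \<and> norm (u, v) > 1 \<longrightarrow> \<bar>pd2 DU h u v\<bar> \<le> C / norm (u, v) ^ 2) \<and>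
     (\<exists>C. \<forall>u v. (u, v) \<notin> W \<and> norm (u, v) > 1 \<longrightarrow> \<bar>pd2 DV h u v\<bar> \<le> C / norm (u, v) ^ 2) \<and>
     \<comment> \<open>(v) uniform bound on numbers of zeros of fibres and their first two derivatives\<close>
     (\<exists>N :: nat. \<forall>m \<le> 2.
        (\<forall>u. finite {v. (u, v) \<notin> W \<and> (deriv ^^ m) (\<lambda>v. h u v) v = 0} \<and>
             card {v. (u, v) \<notin> W \<and> (deriv ^^ m) (\<lambda>v. h u v) v = 0} \<le> N) \<and>
        (\<forall>v. finite {u. (u, v) \<notin> W \<and> (deriv ^^ m) (\<lambda>u. h u v) u = 0} \<and>
             card {u. (u, v) \<notin> W \<and> (deriv ^^ m) (\<lambda>u. h u v) u = 0} \<le> N))"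

definition normal3 :: "(real \<Rightarrow> real \<Rightarrow> real \<Rightarrow> real) \<Rightarrow> bool" where
  "normal3 f \<longleftrightarrow> smooth3 f \<and>
     \<comment> \<open>(i)-(iii): two-variable fibres are normal (with empty exceptional set)\<close>
     (\<forall>x. normal2 {} (\<lambda>y z. f x y z)) \<and>
     (\<forall>y. normal2 {} (\<lambda>x z. f x y z)) \<and>
     (\<forall>z. normal2 {} (\<lambda>x y. f x y z)) \<and>
     \<comment> \<open>(iv) very moderate decrease\<close>
     (\<exists>C. \<forall>x y z. norm (x, y, z) > 1 \<longrightarrow> \<bar>f x y z\<bar> \<le> C / norm (x, y, z)) \<and>
     \<comment> \<open>(v) derivatives of order i+j+k >= 1 of moderate decrease i+j+k+1\<close>
     (\<forall>i j k. i + j + k \<ge> 1 \<longrightarrow>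
        (\<exists>C. \<forall>x y z. norm (x, y, z) > 1 \<longrightarrow>
           \<bar>mixed_pd i j k f x y z\<bar> \<le> C / norm (x, y, z) ^ (i + j + k + 1))) \<and>
     \<comment> \<open>(vi) uniform bound on zeros of one-variable fibres and first four derivatives\<close>
     (\<exists>N :: nat. \<forall>m \<le> 4.
        (\<forall>x y. finite {z. (deriv ^^ m) (\<lambda>z. f x y z) z = 0} \<and>
               card {z. (deriv ^^ m) (\<lambda>z. f x y z) z = 0} \<le> N) \<and>
        (\<forall>x z. finite {y. (deriv ^^ m) (\<lambda>y. f x y z) y = 0} \<and>
               card {y. (deriv ^^ m) (\<lambda>y. f x y z) y = 0} \<le> N) \<and>
        (\<forall>y z. finite {x. (deriv ^^ m) (\<lambda>x. f x y z) x = 0} \<and>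
               card {x. (deriv ^^ m) (\<lambda>x. f x y z) x = 0} \<le> N))"

definition ft1 :: "(real \<Rightarrow> complex) \<Rightarrow> real \<Rightarrow> real \<Rightarrow> complex" where
  "ft1 g k r = integral {-r..r} (\<lambda>a. g a * cis (- (k * a)))"

definition ft2 :: "(real \<Rightarrow> real \<Rightarrow> complex) \<Rightarrow> real \<Rightarrow> real \<Rightarrow> real \<Rightarrow> real \<Rightarrow> complex" where
  "ft2 g k1 k2 r s = integral {-r..r} (\<lambda>b. integral {-s..s}
      (\<lambda>a. g a b * cis (- (k1 * a)) * cis (- (k2 * b))))"

definition ft3 :: "(real \<Rightarrow> real \<Rightarrow> real \<Rightarrow> complex) \<Rightarrow> real \<Rightarrow> real \<Rightarrow> real \<Rightarrow> real \<Rightarrow> real \<Rightarrow> real \<Rightarrow> complex" where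
  "ft3 g k1 k2 k3 r s t = integral {-r..r} (\<lambda>c. integral {-s..s} (\<lambda>b. integral {-t..t}
      (\<lambda>a. g a b c * cis (- (k1 * a)) * cis (- (k2 * b)) * cis (- (k3 * c)))))"

definition fourier1 :: "(real \<Rightarrow> complex) \<Rightarrow> real \<Rightarrow> complex" where
  "fourier1 g k = Lim at_top (\<lambda>r. ft1 g k r)"

definition fourier2 :: "(real \<Rightarrow> real \<Rightarrow> complex) \<Rightarrow> real \<Rightarrow> real \<Rightarrow> complex" where
  "fourier2 g k1 k2 = Lim (at_top \<times>\<^sub>F at_top) (\<lambda>(r, s). ft2 g k1 k2 r s)"

end

(*
  Every truncated Fourier integral of f is an iterated one-dimensional integral along the
  coordinate directions. Along a direction with frequency k \<noteq> 0, integration by parts turns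
  it into boundary terms plus 1/(i k) times the integral of the partial derivative. Measure
  functions with product weights (1 + |x|)^(-e_x) (1 + |y|)^(-e_y) (1 + |z|)^(-e_z): the decay
  hypotheses on f and on its mixed partials of order at most one in each variable give the
  exponent 1/3 in every undifferentiated and 4/3 in every differentiated direction. Since the
  exponent 4/3 is integrable, each one-dimensional truncation then converges at the rate
  (1 + t)^(-1/3), uniformly in the other variables, and the weights of the other directions
  are preserved. Iterating, the 1-, 2- and 3-fold truncations converge jointly in their radii
  at the rate of the sum of these terms. The partial transforms A, ..., H are thus uniform
  limits, the remaining truncated integrals run over bounded boxes and so commute with these
  limits, and Fubini on rectangles brings every order of integration to that of the triple
  integral.
*)
theory Submission
  imports Defs "HOL-Library.Sublist"
begin

section \<open>Weights\<close>

definition weight :: "real \<Rightarrow> real \<Rightarrow> real" where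
  "weight e a = (1 + \<bar>a\<bar>) powr (- e)"

lemma weight_pos: "0 < weight e a"
  by (simp add: weight_def)

lemma weight_le_1: "0 \<le> e \<Longrightarrow> weight e a \<le> 1"
  unfolding weight_def by (simp add: powr_minus inverse_le_1_iff ge_one_powr_ge_zero)

lemma weight_0 [simp]: "weight 0 a = 1" and weight_at_0 [simp]: "weight e 0 = 1"
  by (simp_all add: weight_def)

lemma weight_minus [simp]: "weight e (- a) = weight e a"
  by (simp add: weight_def)

lemma weight_antimono: "0 \<le> e \<Longrightarrow> 0 \<le> t \<Longrightarrow> t \<le> t' \<Longrightarrow> weight e t' \<le> weight e t"
  unfolding weight_def by (intro powr_mono2') auto

lemma continuous_on_weight [continuous_intros]: "continuous_on S (weight e)"
  unfolding weight_def by (intro continuous_intros) auto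

lemma tendsto_weight_at_top: "0 < e \<Longrightarrow> (weight e \<longlongrightarrow> 0) at_top"
proof -
  have "filterlim (\<lambda>a::real. 1 + \<bar>a\<bar>) at_top at_top"
    by (rule filterlim_at_top_mono[OF filterlim_ident]) (auto intro: always_eventually)
  then show "0 < e \<Longrightarrow> (weight e \<longlongrightarrow> 0) at_top"
    unfolding weight_def by (intro tendsto_neg_powr) auto
qed

lemma has_integral_weight:
  assumes "0 < e" "0 \<le> t" "t \<le> t'"
  shows "(weight (1 + e) has_integral (weight e t - weight e t') / e) {t..t'}"
proof -
  define F where "F a = - ((1 + a) powr (- e) / e)" for a
  have "(F has_real_derivative weight (1 + e) a) (at a within {t..t'})" if "a \<in> {t..t'}" for a
  proof -
    have a: "0 \<le> a" using that assms by auto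
    have "(F has_real_derivative - ((- e) * (1 + a) powr (- e - 1) / e)) (at a)"
      unfolding F_def using a by (auto intro!: derivative_eq_intros)
    moreover have "(1 + a) powr (- e - 1) = (1 + a) powr (- (1 + e))"
      by (rule arg_cong[where f = "\<lambda>x. (1 + a) powr x"]) simp
    then have "- ((- e) * (1 + a) powr (- e - 1) / e) = weight (1 + e) a"
      using assms a by (simp add: weight_def)
    ultimately show ?thesis by (simp add: has_field_derivative_at_within)
  qed
  from fundamental_theorem_of_calculus[OF assms(3) this[unfolded has_real_derivative_iff_has_vector_derivative]]
  show ?thesis using assms by (simp add: F_def weight_def[of e] diff_divide_distrib)
qed

lemma tendsto_weight_sequentially: "0 < e \<Longrightarrow> (\<lambda>n. weight e (real n)) \<longlonglongrightarrow> 0"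
  using filterlim_compose[OF tendsto_weight_at_top filterlim_real_sequentially] .

section \<open>Limits with a rate\<close>

lemma limit_with_rate:
  fixes X :: "('i \<Rightarrow> real) \<Rightarrow> 'a::banach"
  assumes incr: "\<And>ts ts'. (\<And>i. 0 \<le> ts i) \<Longrightarrow> ts \<le> ts' \<Longrightarrow> norm (X ts' - X ts) \<le> \<beta> ts"
    and lim: "(\<lambda>n. \<beta> (\<lambda>_. real n)) \<longlonglongrightarrow> 0"
  obtains L where "\<And>ts. (\<And>i. 0 \<le> ts i) \<Longrightarrow> norm (X ts - L) \<le> \<beta> ts"
proof -
  let ?x = "\<lambda>n::nat. X (\<lambda>_. real n)"
  have "Cauchy ?x"
  proof (rule CauchyI')
    fix \<epsilon> :: real
    assume "0 < \<epsilon>"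
    with lim obtain N where N: "\<And>n. N \<le> n \<Longrightarrow> \<beta> (\<lambda>_. real n) < \<epsilon>"
      unfolding lim_sequentially dist_real_def by (metis abs_less_iff diff_zero)
    have "dist (?x m) (?x n) < \<epsilon>" if "N \<le> m" "m < n" for m n
      using incr[of "\<lambda>_. real m" "\<lambda>_. real n"] N[OF that(1)] that(2)
      by (simp add: dist_norm norm_minus_commute le_fun_def)
    then show "\<exists>N. \<forall>m\<ge>N. \<forall>n>m. dist (?x m) (?x n) < \<epsilon>" by blast
  qed
  then obtain L where L: "?x \<longlonglongrightarrow> L"
    using Cauchy_convergent_iff convergent_def by blast
  have "norm (X ts - L) \<le> \<beta> ts" if ts: "\<And>i. 0 \<le> ts i" for ts
  proof (rule LIMSEQ_le_const)
    \<comment> \<open>compare ts with the diagonal through the common upper bound ?ts n\<close>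
    let ?ts = "\<lambda>n i. max (ts i) (real n)"
    show "(\<lambda>n. norm (?x n - L) + \<beta> (\<lambda>_. real n) + \<beta> ts) \<longlonglongrightarrow> \<beta> ts"
      using tendsto_add[OF tendsto_add[OF tendsto_norm_zero[OF LIM_zero[OF L]] lim] tendsto_const]
      by simp
    have "norm (X ts - L) \<le> norm (?x n - L) + \<beta> (\<lambda>_. real n) + \<beta> ts" for n
    proof -
      have "norm (X ts - L) = norm ((?x n - L) + (X (?ts n) - ?x n) - (X (?ts n) - X ts))"
        by (simp add: algebra_simps)
      also have "\<dots> \<le> norm (?x n - L) + norm (X (?ts n) - ?x n) + norm (X (?ts n) - X ts)"
        using norm_triangle_ineq4 add_right_mono[OF norm_triangle_ineq] by (rule order_trans)
      also have "\<dots> \<le> norm (?x n - L) + \<beta> (\<lambda>_. real n) + \<beta> ts"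
        by (intro add_mono order_refl incr) (auto simp: le_fun_def ts)
      finally show ?thesis .
    qed
    then show "\<exists>N. \<forall>n\<ge>N. norm (X ts - L) \<le> norm (?x n - L) + \<beta> (\<lambda>_. real n) + \<beta> ts"
      by blast
  qed
  then show ?thesis by (rule that)
qed

lemma continuous_on_uniform_rate:
  assumes "\<And>n. continuous_on S (F n)" "\<And>n x. x \<in> S \<Longrightarrow> dist (F n x) (\<Phi> x) \<le> b n"
    and "b \<longlonglongrightarrow> 0"
  shows "continuous_on S \<Phi>"
proof (rule uniform_limit_theorem)
  show "uniform_limit S F \<Phi> sequentially"
  proof (rule uniform_limitI)
    fix \<epsilon> :: real
    assume "0 < \<epsilon>"
    with assms(3) have "\<forall>\<^sub>F n in sequentially. b n < \<epsilon>"
      by (auto dest: order_tendstoD)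
    then show "\<forall>\<^sub>F n in sequentially. \<forall>x\<in>S. dist (F n x) (\<Phi> x) < \<epsilon>"
      by (rule eventually_mono) (use assms(2) le_less_trans in blast)
  qed
qed (use assms(1) in simp_all)

lemma tendsto_at_top_of_rate:
  fixes X :: "real \<Rightarrow> 'a::real_normed_vector"
  assumes "0 < e" "\<And>r. 0 \<le> r \<Longrightarrow> norm (X r - L) \<le> K * weight e r"
  shows "(X \<longlongrightarrow> L) at_top"
proof (rule LIM_zero_cancel, rule Lim_null_comparison)
  show "\<forall>\<^sub>F r in at_top. norm (X r - L) \<le> K * weight e r"
    using eventually_ge_at_top[of 0] by eventually_elim (rule assms(2))
  show "((\<lambda>r. K * weight e r) \<longlongrightarrow> 0) at_top"
    using tendsto_mult_right_zero[OF tendsto_weight_at_top[OF assms(1)]] .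
qed

lemma tendsto_at_top2_of_rate:
  fixes X :: "real \<Rightarrow> real \<Rightarrow> 'a::real_normed_vector"
  assumes "0 < e" "\<And>r s. 0 \<le> r \<Longrightarrow> 0 \<le> s \<Longrightarrow> norm (X r s - L) \<le> K * (weight e r + weight e s)"
  shows "((\<lambda>(r, s). X r s) \<longlongrightarrow> L) (at_top \<times>\<^sub>F at_top)"
proof (rule LIM_zero_cancel, rule Lim_null_comparison)
  let ?F = "at_top \<times>\<^sub>F at_top :: (real \<times> real) filter"
  have lim: "filterlim fst at_top ?F" "filterlim snd at_top ?F"
    by (rule filterlim_fst filterlim_snd)+
  then have "\<forall>\<^sub>F x in ?F. 0 \<le> fst x" "\<forall>\<^sub>F x in ?F. 0 \<le> snd x"
    unfolding filterlim_at_top by blast+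
  then show "\<forall>\<^sub>F x in ?F. norm ((\<lambda>(r, s). X r s) x - L) \<le> K * (weight e (fst x) + weight e (snd x))"
    by eventually_elim (simp add: case_prod_unfold assms(2))
  show "((\<lambda>x. K * (weight e (fst x) + weight e (snd x))) \<longlongrightarrow> 0) ?F"
    using tendsto_mult_right_zero[OF tendsto_add_zero[OF
          filterlim_compose[OF tendsto_weight_at_top[OF assms(1)] lim(1)]
          filterlim_compose[OF tendsto_weight_at_top[OF assms(1)] lim(2)]]] .
qed

lemma tendsto_at_top3_of_rate:
  fixes X :: "real \<Rightarrow> real \<Rightarrow> real \<Rightarrow> 'a::real_normed_vector"
  assumes "0 < e"
    and "\<And>r s t. 0 \<le> r \<Longrightarrow> 0 \<le> s \<Longrightarrow> 0 \<le> t \<Longrightarrow>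
      norm (X r s t - L) \<le> K * (weight e r + weight e s + weight e t)"
  shows "((\<lambda>(r, s, t). X r s t) \<longlongrightarrow> L) (at_top \<times>\<^sub>F (at_top \<times>\<^sub>F at_top))"
proof (rule LIM_zero_cancel, rule Lim_null_comparison)
  let ?F = "at_top \<times>\<^sub>F (at_top \<times>\<^sub>F at_top) :: (real \<times> real \<times> real) filter"
  have lim: "filterlim fst at_top ?F" "filterlim (\<lambda>x. fst (snd x)) at_top ?F"
    "filterlim (\<lambda>x. snd (snd x)) at_top ?F"
    by (auto intro: filterlim_fst filterlim_compose[OF filterlim_fst filterlim_snd]
        filterlim_compose[OF filterlim_snd filterlim_snd])
  then have "\<forall>\<^sub>F x in ?F. 0 \<le> fst x" "\<forall>\<^sub>F x in ?F. 0 \<le> fst (snd x)"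
    "\<forall>\<^sub>F x in ?F. 0 \<le> snd (snd x)"
    unfolding filterlim_at_top by blast+
  then show "\<forall>\<^sub>F x in ?F. norm ((\<lambda>(r, s, t). X r s t) x - L)
      \<le> K * (weight e (fst x) + weight e (fst (snd x)) + weight e (snd (snd x)))"
    by eventually_elim (simp add: case_prod_unfold assms(2))
  show "((\<lambda>x. K * (weight e (fst x) + weight e (fst (snd x)) + weight e (snd (snd x)))) \<longlongrightarrow> 0) ?F"
    using tendsto_mult_right_zero[OF tendsto_add_zero[OF tendsto_add_zero[OF
          filterlim_compose[OF tendsto_weight_at_top[OF assms(1)] lim(1)]
          filterlim_compose[OF tendsto_weight_at_top[OF assms(1)] lim(2)]]
          filterlim_compose[OF tendsto_weight_at_top[OF assms(1)] lim(3)]]] .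
qed

section \<open>Truncated Fourier integrals on the line\<close>

lemma ft1_0 [simp]: "ft1 \<phi> k 0 = 0"
  by (simp add: ft1_def)

lemma integrable_ft1_integrand:
  "continuous_on UNIV \<phi> \<Longrightarrow> (\<lambda>a. \<phi> a * cis (- (k * a))) integrable_on {a..b}"
  by (rule integrable_continuous_interval) (auto intro!: continuous_intros elim: continuous_on_subset)

lemma ft1_diff_eq:
  assumes "continuous_on UNIV \<phi>" "0 \<le> t" "t \<le> t'"
  shows "ft1 \<phi> k t' - ft1 \<phi> k t = integral {-t'..-t} (\<lambda>a. \<phi> a * cis (- (k * a)))
    + integral {t..t'} (\<lambda>a. \<phi> a * cis (- (k * a)))"
proof -
  let ?g = "\<lambda>a. \<phi> a * cis (- (k * a))"
  have "integral {-t'..t'} ?g = integral {-t'..-t} ?g + integral {-t..t'} ?g"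
    "integral {-t..t'} ?g = integral {-t..t} ?g + integral {t..t'} ?g"
    using assms by (simp_all add: Henstock_Kurzweil_Integration.integral_combine integrable_ft1_integrand)
  then show ?thesis by (simp add: ft1_def)
qed

lemma ft1_diff_bound:
  assumes "continuous_on UNIV \<phi>" "0 < e" "\<And>a. norm (\<phi> a) \<le> C * weight (1 + e) a"
    and "0 \<le> t" "t \<le> t'"
  shows "norm (ft1 \<phi> k t' - ft1 \<phi> k t) \<le> 2 * C / e * weight e t"
proof -
  let ?g = "\<lambda>a. \<phi> a * cis (- (k * a))" and ?I = "\<lambda>u v. integral {u..v} (weight (1 + e))"
  have C: "0 \<le> C" using order_trans[OF norm_ge_zero assms(3)[of 0]] by simp
  have bound: "norm (integral {u..v} ?g) \<le> C * ?I u v" for u v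
    using integral_norm_bound_integral[OF integrable_ft1_integrand[OF assms(1)], of
        "\<lambda>a. C * weight (1 + e) a"]
    by (simp add: norm_mult assms(3) integrable_continuous_interval continuous_intros)
  have "?I (-t') (-t) = ?I t t'"
    using Henstock_Kurzweil_Integration.integral_reflect_real[of t' t "weight (1 + e)"] by simp
  moreover have "?I t t' \<le> weight e t / e"
    using has_integral_weight[OF assms(2,4,5)] weight_pos[of e t']
    by (simp add: integral_unique divide_right_mono assms(2) less_imp_le)
  ultimately have "C * ?I (-t') (-t) + C * ?I t t' \<le> 2 * C / e * weight e t"
    using mult_left_mono[OF _ C] by fastforce
  moreover have "norm (ft1 \<phi> k t' - ft1 \<phi> k t) \<le> C * ?I (-t') (-t) + C * ?I t t'"
    unfolding ft1_diff_eq[OF assms(1,4,5)] using norm_triangle_le[OF add_mono[OF bound bound]] .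
  ultimately show ?thesis by linarith
qed

lemma has_vector_derivative_cis_linear:
  "((\<lambda>a. cis (- (k * a))) has_vector_derivative - (\<i> * k) * cis (- (k * a))) (at a within S)"
proof -
  have "((\<lambda>a. cis (- (k * a))) has_derivative (\<lambda>h. (- (k * h)) *\<^sub>R (\<i> * cis (- (k * a)))))
      (at a within S)"
    by (auto intro!: derivative_eq_intros)
  then show ?thesis
    unfolding has_vector_derivative_def by (simp add: scaleR_conv_of_real algebra_simps)
qed

lemma ft1_by_parts:
  assumes "k \<noteq> 0" "0 \<le> t"
    and "\<And>a. (\<phi> has_vector_derivative \<phi>' a) (at a)" "continuous_on UNIV \<phi>'"
  shows "ft1 \<phi> k t = (\<phi> t * cis (- (k * t)) - \<phi> (- t) * cis (k * t)) / (- (\<i> * k))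
    + ft1 \<phi>' k t / (\<i> * k)"
proof -
  define c where "c = - (\<i> * complex_of_real k)"
  have c: "c \<noteq> 0" using assms(1) by (simp add: c_def)
  let ?g = "\<lambda>a. \<phi> a * cis (- (k * a))"
  have "((\<lambda>a. \<phi> a * (cis (- (k * a)) / c)) has_vector_derivative
      ?g a + \<phi>' a * (cis (- (k * a)) / c)) (at a within {-t..t})" for a
    using has_vector_derivative_mult[OF has_vector_derivative_at_within[OF assms(3)]
        has_vector_derivative_divide[OF has_vector_derivative_cis_linear[of k a], where a = c]] c
    by (simp add: c_def algebra_simps)
  from fundamental_theorem_of_calculus[OF _ this] assms(2)
  have "((\<lambda>a. ?g a + \<phi>' a * cis (- (k * a)) / c) has_integral
      \<phi> t * cis (- (k * t)) / c - \<phi> (- t) * cis (k * t) / c) {-t..t}"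
    by simp
  moreover have "continuous_on UNIV \<phi>"
    using assms(3) continuous_at_imp_continuous_on has_vector_derivative_continuous by blast
  ultimately have "ft1 \<phi> k t + ft1 \<phi>' k t / c = \<phi> t * cis (- (k * t)) / c - \<phi> (- t) * cis (k * t) / c"
    unfolding ft1_def
    by (subst integral_divide[symmetric], subst integral_add[symmetric])
       (auto simp: integrable_ft1_integrand assms(4) integrable_on_divide dest: integral_unique)
  then show ?thesis
    unfolding c_def by (simp add: diff_divide_distrib algebra_simps)
qed

lemma ft1_diff_bound_by_parts:
  assumes "k \<noteq> 0" "0 < e"
    and "\<And>a. (\<phi> has_vector_derivative \<phi>' a) (at a)" "continuous_on UNIV \<phi>'"
    and "\<And>a. norm (\<phi> a) \<le> C * weight e a" "\<And>a. norm (\<phi>' a) \<le> C * weight (1 + e) a"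
    and "0 \<le> t" "t \<le> t'"
  shows "norm (ft1 \<phi> k t' - ft1 \<phi> k t) \<le> (4 + 2 / e) * C / \<bar>k\<bar> * weight e t"
proof -
  define P where "P s = (\<phi> s * cis (- (k * s)) - \<phi> (- s) * cis (k * s)) / (- (\<i> * k))" for s
  have C: "0 \<le> C" using order_trans[OF norm_ge_zero assms(5)[of 0]] by simp
  have P: "norm (P s) \<le> 2 * C / \<bar>k\<bar> * weight e t" if "t \<le> s" for s
  proof -
    have "norm (P s) = norm (\<phi> s * cis (- (k * s)) - \<phi> (- s) * cis (k * s)) / \<bar>k\<bar>"
      by (simp add: P_def norm_divide norm_mult)
    also have "\<dots> \<le> (norm (\<phi> s) + norm (\<phi> (- s))) / \<bar>k\<bar>"
      by (intro divide_right_mono order_trans[OF norm_triangle_ineq4]) (simp_all add: norm_mult)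
    also have "\<dots> \<le> 2 * C * weight e s / \<bar>k\<bar>"
      using add_mono[OF assms(5)[of s] assms(5)[of "- s"]] by (simp add: divide_right_mono)
    also have "\<dots> \<le> 2 * C * weight e t / \<bar>k\<bar>"
      using weight_antimono[of e t s] assms(2,7) that C
      by (simp add: divide_right_mono mult_left_mono)
    finally show ?thesis by simp
  qed
  have "ft1 \<phi> k t' - ft1 \<phi> k t = P t' - P t + (ft1 \<phi>' k t' - ft1 \<phi>' k t) / (\<i> * k)"
    using ft1_by_parts[OF assms(1) _ assms(3,4)] assms(7,8)
    by (simp add: P_def diff_divide_distrib)
  also have "norm \<dots> \<le> norm (P t') + norm (P t) + norm (ft1 \<phi>' k t' - ft1 \<phi>' k t) / \<bar>k\<bar>"
    by (simp add: norm_divide norm_mult norm_triangle_le norm_triangle_ineq4)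
  also have "\<dots> \<le> 2 * C / \<bar>k\<bar> * weight e t + 2 * C / \<bar>k\<bar> * weight e t
      + 2 * C / e * weight e t / \<bar>k\<bar>"
    using ft1_diff_bound[OF _ assms(2,6,7,8)] assms(4,8)
    by (intro add_mono P divide_right_mono) auto
  also have "\<dots> = (4 + 2 / e) * C / \<bar>k\<bar> * weight e t"
    by (simp add: add_divide_distrib distrib_right)
  finally show ?thesis .
qed

lemma ft1_diff_fun:
  assumes "continuous_on UNIV \<phi>" "continuous_on UNIV \<psi>"
  shows "ft1 (\<lambda>a. \<phi> a - \<psi> a) k t = ft1 \<phi> k t - ft1 \<psi> k t"
  unfolding ft1_def
  using integral_diff[OF integrable_ft1_integrand[OF assms(1)] integrable_ft1_integrand[OF assms(2)]]
  by (simp add: left_diff_distrib)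

lemma norm_ft1_le:
  assumes "continuous_on UNIV \<phi>" "\<And>a. norm (\<phi> a) \<le> \<epsilon>" "0 \<le> t"
  shows "norm (ft1 \<phi> k t) \<le> 2 * t * \<epsilon>"
  using integral_norm_bound_integral[OF integrable_ft1_integrand[OF assms(1)], of
      "\<lambda>_. \<epsilon>" "-t" t k] assms(2,3)
  by (simp add: ft1_def norm_mult integrable_const_ivl)

lemma fourier1_eqI: "(ft1 g k \<longlongrightarrow> L) at_top \<Longrightarrow> fourier1 g k = L"
  unfolding fourier1_def by (rule tendsto_Lim) simp_all

lemma fourier2_eqI:
  "((\<lambda>(r, s). ft2 g k1 k2 r s) \<longlongrightarrow> L) (at_top \<times>\<^sub>F at_top) \<Longrightarrow> fourier2 g k1 k2 = L"
  unfolding fourier2_def by (rule tendsto_Lim) (simp_all add: prod_filter_eq_bot)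

section \<open>Transforms along coordinate directions\<close>

lemma UNIV_dir3: "(UNIV :: dir3 set) = {DX, DY, DZ}"
  using dir3.exhaust by auto

instance dir3 :: finite
  by standard (simp add: UNIV_dir3)

type_synonym point = "real \<times> real \<times> real"

fun coord :: "dir3 \<Rightarrow> point \<Rightarrow> real" where
  "coord DX p = fst p"
| "coord DY p = fst (snd p)"
| "coord DZ p = snd (snd p)"

fun set_coord :: "dir3 \<Rightarrow> real \<Rightarrow> point \<Rightarrow> point" where
  "set_coord DX a p = (a, snd p)"
| "set_coord DY a p = (fst p, a, snd (snd p))"
| "set_coord DZ a p = (fst p, fst (snd p), a)"

lemma coord_set_coord [simp]: "coord d (set_coord d' a p) = (if d = d' then a else coord d p)"
  by (cases d; cases d') auto

lemma set_coord_swap: "d \<noteq> d' \<Longrightarrow> set_coord d a (set_coord d' b p) = set_coord d' b (set_coord d a p)"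
  by (cases d; cases d') auto

lemma continuous_on_set_coord [continuous_intros]:
  "continuous_on S f \<Longrightarrow> continuous_on S g \<Longrightarrow> continuous_on S (\<lambda>x. set_coord d (f x) (g x))"
  by (cases d) (auto intro!: continuous_intros)

lemma continuous_on_compose_set_coord:
  "continuous_on UNIV H \<Longrightarrow> continuous_on S f \<Longrightarrow> continuous_on S g \<Longrightarrow>
    continuous_on S (\<lambda>x. H (set_coord d (f x) (g x)))"
  by (rule continuous_on_compose2[of UNIV H]) (auto intro!: continuous_intros)

lemma continuous_on_line:
  "continuous_on UNIV H \<Longrightarrow> continuous_on UNIV (\<lambda>a. H (set_coord d a p))"
  by (rule continuous_on_compose_set_coord) (auto intro: continuous_intros)

lemma abs_coord_le_norm: "\<bar>coord d p\<bar> \<le> norm p"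
proof -
  obtain x y z where p: "p = (x, y, z)" by (cases p) auto
  have "\<bar>x\<bar> \<le> norm p" "norm (y, z) \<le> norm p"
    using norm_fst_le[of x "(y, z)"] norm_snd_le[of "(y, z)" x] by (simp_all add: p)
  moreover have "\<bar>y\<bar> \<le> norm (y, z)" "\<bar>z\<bar> \<le> norm (y, z)"
    using norm_fst_le[of y z] norm_snd_le[of z y] by simp_all
  ultimately show ?thesis by (cases d) (auto simp: p)
qed

definition lift3 :: "(real \<Rightarrow> real \<Rightarrow> real \<Rightarrow> real) \<Rightarrow> point \<Rightarrow> complex" where
  "lift3 g p = complex_of_real (g (coord DX p) (coord DY p) (coord DZ p))"

definition weight3 :: "(dir3 \<Rightarrow> real) \<Rightarrow> point \<Rightarrow> real" where
  "weight3 e p = (\<Prod>d\<in>UNIV. weight (e d) (coord d p))"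

lemma weight3_pos: "0 < weight3 e p"
  unfolding weight3_def by (intro prod_pos weight_pos)

lemma weight3_le_1: "(\<And>d. 0 \<le> e d) \<Longrightarrow> weight3 e p \<le> 1"
  unfolding weight3_def by (auto intro!: prod_le_1 weight_le_1 less_imp_le[OF weight_pos])

lemma weight3_set_coord: "weight3 e (set_coord d a p) = weight (e d) a * weight3 (e(d := 0)) p"
proof -
  have "weight3 e (set_coord d a p) = weight (e d) a * (\<Prod>d'\<in>UNIV - {d}. weight (e d') (coord d' p))"
    unfolding weight3_def by (subst prod.remove[of _ d]) (auto intro!: prod.cong)
  also have "(\<Prod>d'\<in>UNIV - {d}. weight (e d') (coord d' p)) = weight3 (e(d := 0)) p"
    unfolding weight3_def by (subst prod.remove[of _ d]) (auto intro!: prod.cong)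
  finally show ?thesis .
qed

definition wbounded :: "(dir3 \<Rightarrow> real) \<Rightarrow> real \<Rightarrow> (point \<Rightarrow> complex) \<Rightarrow> bool" where
  "wbounded e M H \<longleftrightarrow> (\<forall>p. norm (H p) \<le> M * weight3 e p)"

lemma wboundedD: "wbounded e M H \<Longrightarrow> norm (H p) \<le> M * weight3 e p"
  unfolding wbounded_def by blast

lemma wbounded_nonneg: "wbounded e M H \<Longrightarrow> 0 \<le> M"
  unfolding wbounded_def using weight3_pos[of e undefined]
  by (metis norm_ge_zero order_trans zero_le_mult_iff not_le)

lemma wbounded_mono: "wbounded e M H \<Longrightarrow> M \<le> M' \<Longrightarrow> wbounded e M' H"
  unfolding wbounded_def by (meson less_imp_le mult_right_mono order_trans weight3_pos)

lemma wbounded_add: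
  "wbounded e M1 H1 \<Longrightarrow> wbounded e M2 H2 \<Longrightarrow> wbounded e (M1 + M2) (\<lambda>p. H1 p + H2 p)"
  unfolding wbounded_def by (metis distrib_right norm_triangle_le add_mono)

lemma norm_le_of_wbounded: "wbounded e M H \<Longrightarrow> (\<And>d. 0 \<le> e d) \<Longrightarrow> norm (H p) \<le> M"
  unfolding wbounded_def
  by (metis mult_left_le order_trans weight3_le_1 wbounded_def wbounded_nonneg less_imp_le weight3_pos)

definition has_dir_deriv :: "dir3 \<Rightarrow> (point \<Rightarrow> complex) \<Rightarrow> (point \<Rightarrow> complex) \<Rightarrow> bool" where
  "has_dir_deriv d H H' \<longleftrightarrow>
    (\<forall>p a. ((\<lambda>b. H (set_coord d b p)) has_vector_derivative H' (set_coord d a p)) (at a))"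

lemma has_dir_derivD:
  "has_dir_deriv d H H' \<Longrightarrow> ((\<lambda>b. H (set_coord d b p)) has_vector_derivative H' (set_coord d a p)) (at a)"
  unfolding has_dir_deriv_def by blast

definition ft_dir :: "dir3 \<Rightarrow> real \<Rightarrow> real \<Rightarrow> (point \<Rightarrow> complex) \<Rightarrow> point \<Rightarrow> complex" where
  "ft_dir d k t H p = ft1 (\<lambda>a. H (set_coord d a p)) k t"

lemma ft_dir_0 [simp]: "ft_dir d k 0 H p = 0"
  by (simp add: ft_dir_def)

lemma continuous_on_ft_dir [continuous_intros]:
  assumes "continuous_on UNIV H"
  shows "continuous_on UNIV (ft_dir d k t H)"
proof -
  have "continuous_on (UNIV \<times> cbox (-t) t) (\<lambda>(p, a). H (set_coord d a p) * cis (- (k * a)))"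
    unfolding case_prod_unfold by (intro continuous_intros continuous_on_compose_set_coord assms)
  from integral_continuous_on_param[OF this] show ?thesis
    by (simp add: ft_dir_def ft1_def)
qed

lemma ft_dir_diff:
  assumes "continuous_on UNIV H1" "continuous_on UNIV H2"
  shows "ft_dir d k t (\<lambda>p. H1 p - H2 p) p = ft_dir d k t H1 p - ft_dir d k t H2 p"
  unfolding ft_dir_def
  by (rule ft1_diff_fun[OF continuous_on_line[OF assms(1)] continuous_on_line[OF assms(2)]])

lemma has_dir_deriv_ft_dir:
  assumes "d' \<noteq> d" "has_dir_deriv d' H H'" "continuous_on UNIV H" "continuous_on UNIV H'"
  shows "has_dir_deriv d' (ft_dir d k t H) (ft_dir d k t H')"
  unfolding has_dir_deriv_def
proof (intro allI)
  fix p b0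
  define g where "g = (\<lambda>b a. H (set_coord d a (set_coord d' b p)) * cis (- (k * a)))"
  define g' where "g' = (\<lambda>b a. H' (set_coord d a (set_coord d' b p)) * cis (- (k * a)))"
  have "((\<lambda>b. g b a) has_vector_derivative g' b a) (at b within UNIV)" for b a
    using has_vector_derivative_mult_left[OF has_dir_derivD[OF assms(2), of "set_coord d a p" b]]
    by (simp add: g_def g'_def set_coord_swap[OF assms(1)])
  moreover have "g b integrable_on cbox (-t) t" for b
    unfolding g_def
    by (intro integrable_continuous continuous_intros continuous_on_compose_set_coord assms(3))
  moreover have "continuous_on (UNIV \<times> cbox (-t) t) (\<lambda>(b, a). g' b a)"
    unfolding g'_def case_prod_unfold
    by (intro continuous_intros continuous_on_compose_set_coord assms(4))
  ultimately have "((\<lambda>b. integral (cbox (-t) t) (g b)) has_vector_derivative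
      integral (cbox (-t) t) (g' b0)) (at b0)"
    using leibniz_rule_vector_derivative[of UNIV "-t" t g g' b0] by simp
  then show "((\<lambda>b. ft_dir d k t H (set_coord d' b p)) has_vector_derivative
      ft_dir d k t H' (set_coord d' b0 p)) (at b0)"
    by (simp add: ft_dir_def ft1_def g_def g'_def)
qed

lemma ft_dir_commute:
  assumes "d1 \<noteq> d2" "continuous_on UNIV H"
  shows "ft_dir d1 k1 t1 (ft_dir d2 k2 t2 H) = ft_dir d2 k2 t2 (ft_dir d1 k1 t1 H)"
proof
  fix p
  define g where "g a b = H (set_coord d2 b (set_coord d1 a p)) * cis (- (k2 * b)) * cis (- (k1 * a))"
    for a b
  have "continuous_on (cbox (-t1, -t2) (t1, t2)) (\<lambda>(a, b). g a b)"
    unfolding g_def case_prod_unfold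
    by (intro continuous_intros continuous_on_compose_set_coord assms(2))
  from integral_swap_continuous[OF this]
  show "ft_dir d1 k1 t1 (ft_dir d2 k2 t2 H) p = ft_dir d2 k2 t2 (ft_dir d1 k1 t1 H) p"
    by (simp add: ft_dir_def ft1_def g_def set_coord_swap[OF assms(1)] mult_ac
        flip: integral_mult_left integral_mult_right)
qed

lemma has_dir_deriv_add:
  "has_dir_deriv d H1 H1' \<Longrightarrow> has_dir_deriv d H2 H2' \<Longrightarrow>
    has_dir_deriv d (\<lambda>p. H1 p + H2 p) (\<lambda>p. H1' p + H2' p)"
  by (simp add: has_dir_deriv_def has_vector_derivative_add)

lemma has_dir_deriv_diff:
  "has_dir_deriv d H1 H1' \<Longrightarrow> has_dir_deriv d H2 H2' \<Longrightarrow>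
    has_dir_deriv d (\<lambda>p. H1 p - H2 p) (\<lambda>p. H1' p - H2' p)"
  by (simp add: has_dir_deriv_def has_vector_derivative_diff)

lemma wbounded_ft_dir_diff:
  assumes "has_dir_deriv d H H'" "continuous_on UNIV H'"
    and "wbounded e M H" "wbounded (e(d := 4/3)) M H'" "e d = 1/3"
    and "k \<noteq> 0" "0 \<le> t" "t \<le> t'"
  shows "wbounded (e(d := 0)) (10 / \<bar>k\<bar> * weight (1/3) t * M)
    (\<lambda>p. ft_dir d k t' H p - ft_dir d k t H p)"
  unfolding wbounded_def
proof
  fix p
  let ?C = "M * weight3 (e(d := 0)) p"
  have bound: "norm (H (set_coord d a p)) \<le> ?C * weight (1/3) a" for a
    using wboundedD[OF assms(3), of "set_coord d a p"] assms(5)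
    by (simp add: weight3_set_coord mult_ac)
  have bound': "norm (H' (set_coord d a p)) \<le> ?C * weight (1 + 1/3) a" for a
    using wboundedD[OF assms(4), of "set_coord d a p"]
    by (simp add: weight3_set_coord mult_ac)
  have "norm (ft_dir d k t' H p - ft_dir d k t H p) \<le> (4 + 2 / (1/3)) * ?C / \<bar>k\<bar> * weight (1/3) t"
    unfolding ft_dir_def
    by (rule ft1_diff_bound_by_parts[OF assms(6) _ has_dir_derivD[OF assms(1)]
          continuous_on_line[OF assms(2)] bound bound' assms(7,8)]) simp
  then show "norm (ft_dir d k t' H p - ft_dir d k t H p) \<le> 10 / \<bar>k\<bar> * weight (1/3) t * M * weight3 (e(d := 0)) p"
    by (simp add: field_simps)
qed

section \<open>Admissible functions\<close>

(* The head of ds is differentiated first, and each differentiation raises the weight exponent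
   of its direction to 4/3. For a normal function and exponents 1/3, the sum of the exponents
   is exactly the order of decrease required of the corresponding mixed partial derivative. *)
fun admissible :: "dir3 list \<Rightarrow> (dir3 \<Rightarrow> real) \<Rightarrow> real \<Rightarrow> (point \<Rightarrow> complex) \<Rightarrow> bool" where
  "admissible [] e M H \<longleftrightarrow> continuous_on UNIV H \<and> wbounded e M H"
| "admissible (d # ds) e M H \<longleftrightarrow>
    admissible ds e M H \<and> (\<exists>H'. has_dir_deriv d H H' \<and> admissible ds (e(d := 4/3)) M H')"

lemma admissible_continuous: "admissible ds e M H \<Longrightarrow> continuous_on UNIV H"
  by (induction ds) auto

lemma admissible_zero: "admissible ds e 0 (\<lambda>_. 0)"
  by (induction ds arbitrary: e) (auto simp: wbounded_def has_dir_deriv_def intro!: exI[of _ "\<lambda>_. 0"])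

lemma admissible_add:
  "admissible ds e M1 H1 \<Longrightarrow> admissible ds e M2 H2 \<Longrightarrow> admissible ds e (M1 + M2) (\<lambda>p. H1 p + H2 p)"
proof (induction ds arbitrary: e H1 H2)
  case Nil
  then show ?case by (auto intro: continuous_intros wbounded_add)
next
  case (Cons d ds)
  then show ?case by (fastforce intro: has_dir_deriv_add)
qed

lemma admissible_ft_dir_diff:
  assumes "admissible (ds @ [d]) e M H" "d \<notin> set ds" "e d = 1/3"
    and "k \<noteq> 0" "0 \<le> t" "t \<le> t'"
  shows "admissible ds (e(d := 0)) (10 / \<bar>k\<bar> * weight (1/3) t * M)
    (\<lambda>p. ft_dir d k t' H p - ft_dir d k t H p)"
  using assms(1-3)
proof (induction ds arbitrary: e H)
  case Nil
  then obtain H' where H': "has_dir_deriv d H H'" "continuous_on UNIV H'" "wbounded (e(d := 4/3)) M H'"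
    and H: "continuous_on UNIV H" "wbounded e M H"
    by auto
  have "continuous_on UNIV (\<lambda>p. ft_dir d k t' H p - ft_dir d k t H p)"
    using H(1) by (intro continuous_intros)
  then show ?case
    using wbounded_ft_dir_diff[OF H'(1,2) H(2) H'(3) Nil.prems(3) assms(4-6)]
    by (simp only: admissible.simps append_Nil)
next
  case (Cons d' ds)
  from Cons.prems obtain H' where H: "admissible (ds @ [d]) e M H"
    and H': "has_dir_deriv d' H H'" "admissible (ds @ [d]) (e(d' := 4/3)) M H'"
    by auto
  have dd: "d' \<noteq> d" and d: "d \<notin> set ds" using Cons.prems(2) by auto
  have cont: "continuous_on UNIV H" "continuous_on UNIV H'"
    using H H'(2) by (auto dest: admissible_continuous)
  have "has_dir_deriv d' (\<lambda>p. ft_dir d k t' H p - ft_dir d k t H p)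
      (\<lambda>p. ft_dir d k t' H' p - ft_dir d k t H' p)"
    using dd cont H'(1) by (intro has_dir_deriv_diff has_dir_deriv_ft_dir) auto
  moreover have "admissible ds ((e(d' := 4/3))(d := 0)) (10 / \<bar>k\<bar> * weight (1/3) t * M)
      (\<lambda>p. ft_dir d k t' H' p - ft_dir d k t H' p)"
    by (rule Cons.IH[OF H'(2) d]) (use dd Cons.prems(3) in simp)
  moreover have "admissible ds (e(d := 0)) (10 / \<bar>k\<bar> * weight (1/3) t * M)
      (\<lambda>p. ft_dir d k t' H p - ft_dir d k t H p)"
    by (rule Cons.IH[OF H d Cons.prems(3)])
  ultimately show ?case
    by (simp only: admissible.simps(2) append_Cons fun_upd_twist[OF dd]) blast
qed

lemma admissible_ft_dir:
  assumes "admissible (ds @ [d]) e M H" "d \<notin> set ds" "e d = 1/3" "k \<noteq> 0" "0 \<le> t"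
  shows "admissible ds (e(d := 0)) (10 / \<bar>k\<bar> * M) (ft_dir d k t H)"
  using admissible_ft_dir_diff[OF assms(1-4) order_refl assms(5)] by simp

lemma norm_le_of_admissible: "admissible [] e M H \<Longrightarrow> (\<And>d. 0 \<le> e d) \<Longrightarrow> norm (H p) \<le> M"
  by (auto intro: norm_le_of_wbounded)

lemma admissible_Nil: "admissible ds e M H \<Longrightarrow> admissible [] e M H"
  by (induction ds) auto

lemma admissible_subseq: "subseq ds' ds \<Longrightarrow> admissible ds e M H \<Longrightarrow> admissible ds' e M H"
proof (induction ds' ds arbitrary: e H rule: list_emb.induct)
  case (list_emb_Nil ys)
  then show ?case by (rule admissible_Nil)
qed auto

section \<open>Iterated transforms\<close>

fun ft_iter :: "dir3 list \<Rightarrow> (dir3 \<Rightarrow> real) \<Rightarrow> (dir3 \<Rightarrow> real) \<Rightarrow> (point \<Rightarrow> complex) \<Rightarrow> point \<Rightarrow> complex"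
  where
    "ft_iter [] k ts H = H"
  | "ft_iter (d # ds) k ts H = ft_dir d (k d) (ts d) (ft_iter ds k ts H)"

lemma ft_iter_append: "ft_iter (xs @ ys) k ts H = ft_iter xs k ts (ft_iter ys k ts H)"
  by (induction xs) auto

lemma continuous_on_ft_iter: "continuous_on UNIV H \<Longrightarrow> continuous_on UNIV (ft_iter ds k ts H)"
  by (induction ds) (auto intro: continuous_on_ft_dir)

lemma ft_iter_cong: "(\<And>d. d \<in> set ds \<Longrightarrow> ts d = ts' d) \<Longrightarrow> ft_iter ds k ts H = ft_iter ds k ts' H"
  by (induction ds) auto

lemma ft_iter_single: "ft_iter [d] k ts H p = ft1 (\<lambda>a. H (set_coord d a p)) (k d) (ts d)"
  by (simp add: ft_dir_def)

lemma ft_iter_pair: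
  "ft_iter [d1, d2] k ts H p =
    ft2 (\<lambda>a b. H (set_coord d2 a (set_coord d1 b p))) (k d2) (k d1) (ts d1) (ts d2)"
  by (simp add: ft_dir_def ft1_def ft2_def flip: integral_mult_left)

lemma ft_iter_triple:
  "ft_iter [d1, d2, d3] k ts H p =
    ft3 (\<lambda>a b c. H (set_coord d3 a (set_coord d2 b (set_coord d1 c p))))
      (k d3) (k d2) (k d1) (ts d1) (ts d2) (ts d3)"
  by (simp add: ft_dir_def ft1_def ft3_def flip: integral_mult_left)

lemma admissible_ft_iter:
  assumes "admissible (pre @ ds) e M H" "distinct (pre @ ds)"
    and "\<And>d. d \<in> set ds \<Longrightarrow> e d = 1/3 \<and> k d \<noteq> 0 \<and> 0 \<le> ts d"
  shows "admissible pre (\<lambda>d. if d \<in> set ds then 0 else e d) (M * (\<Prod>d\<in>set ds. 10 / \<bar>k d\<bar>))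
    (ft_iter ds k ts H)"
  using assms
proof (induction ds arbitrary: pre)
  case Nil
  then show ?case by simp
next
  case (Cons d ds)
  let ?e = "\<lambda>d'. if d' \<in> set ds then 0 else e d'"
  have "admissible (pre @ [d]) ?e (M * (\<Prod>d\<in>set ds. 10 / \<bar>k d\<bar>)) (ft_iter ds k ts H)"
    by (rule Cons.IH) (use Cons.prems in auto)
  then have "admissible pre (?e(d := 0)) (10 / \<bar>k d\<bar> * (M * (\<Prod>d\<in>set ds. 10 / \<bar>k d\<bar>)))
      (ft_dir d (k d) (ts d) (ft_iter ds k ts H))"
    by (rule admissible_ft_dir) (use Cons.prems in auto)
  moreover have "?e(d := 0) = (\<lambda>d'. if d' \<in> set (d # ds) then 0 else e d')"
    by auto
  moreover have "10 / \<bar>k d\<bar> * (M * (\<Prod>d\<in>set ds. 10 / \<bar>k d\<bar>)) = M * (\<Prod>d\<in>set (d # ds). 10 / \<bar>k d\<bar>)"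
    using Cons.prems(2) by simp
  ultimately show ?case by simp
qed

lemma admissible_ft_iter_diff:
  assumes "admissible (pre @ ds) e M H" "distinct (pre @ ds)"
    and "\<And>d. d \<in> set ds \<Longrightarrow> e d = 1/3 \<and> k d \<noteq> 0 \<and> 0 \<le> ts d \<and> ts d \<le> ts' d"
  shows "admissible pre (\<lambda>d. if d \<in> set ds then 0 else e d)
    (M * (\<Prod>d\<in>set ds. 10 / \<bar>k d\<bar>) * (\<Sum>d\<in>set ds. weight (1/3) (ts d)))
    (\<lambda>p. ft_iter ds k ts' H p - ft_iter ds k ts H p)"
  using assms
proof (induction ds arbitrary: pre)
  case Nil
  then show ?case by (simp add: admissible_zero)
next
  case (Cons d ds)
  let ?e = "\<lambda>d'. if d' \<in> set ds then 0 else e d'"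
  let ?K = "M * (\<Prod>d\<in>set ds. 10 / \<bar>k d\<bar>)"
  let ?X = "ft_iter ds k ts H" and ?X' = "ft_iter ds k ts' H"
  have X': "admissible (pre @ [d]) ?e ?K ?X'"
    by (rule admissible_ft_iter) (use Cons.prems in \<open>auto intro: order_trans\<close>)
  have cont: "continuous_on UNIV ?X" "continuous_on UNIV ?X'"
    using Cons.prems(1) by (auto intro: continuous_on_ft_iter admissible_continuous)
  have "admissible (pre @ [d]) ?e (?K * (\<Sum>d\<in>set ds. weight (1/3) (ts d))) (\<lambda>p. ?X' p - ?X p)"
    by (rule Cons.IH) (use Cons.prems in auto)
  then have "admissible pre (?e(d := 0)) (10 / \<bar>k d\<bar> * (?K * (\<Sum>d\<in>set ds. weight (1/3) (ts d))))
      (ft_dir d (k d) (ts d) (\<lambda>p. ?X' p - ?X p))"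
    by (rule admissible_ft_dir) (use Cons.prems in auto)
  moreover have "admissible pre (?e(d := 0)) (10 / \<bar>k d\<bar> * weight (1/3) (ts d) * ?K)
      (\<lambda>p. ft_dir d (k d) (ts' d) ?X' p - ft_dir d (k d) (ts d) ?X' p)"
    by (rule admissible_ft_dir_diff[OF X']) (use Cons.prems in auto)
  ultimately have "admissible pre (?e(d := 0))
      (10 / \<bar>k d\<bar> * weight (1/3) (ts d) * ?K + 10 / \<bar>k d\<bar> * (?K * (\<Sum>d\<in>set ds. weight (1/3) (ts d))))
      (\<lambda>p. (ft_dir d (k d) (ts' d) ?X' p - ft_dir d (k d) (ts d) ?X' p)
        + ft_dir d (k d) (ts d) (\<lambda>p. ?X' p - ?X p) p)"
    by (rule admissible_add[rotated])
  moreover have "?e(d := 0) = (\<lambda>d'. if d' \<in> set (d # ds) then 0 else e d')"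
    by auto
  moreover have "10 / \<bar>k d\<bar> * weight (1/3) (ts d) * ?K + 10 / \<bar>k d\<bar> * (?K * (\<Sum>d\<in>set ds. weight (1/3) (ts d)))
      = M * (\<Prod>d\<in>set (d # ds). 10 / \<bar>k d\<bar>) * (\<Sum>d\<in>set (d # ds). weight (1/3) (ts d))"
    using Cons.prems(2) by (simp add: algebra_simps add_divide_distrib)
  ultimately show ?case
    by (simp add: ft_dir_diff[OF cont(2,1)])
qed

lemma ft_iter_limit:
  assumes "admissible ds e M H" "distinct ds" "\<And>d. d \<in> set ds \<Longrightarrow> e d = 1/3 \<and> k d \<noteq> 0"
    and "\<And>d. 0 \<le> e d"
  obtains \<Phi> where "continuous_on UNIV \<Phi>"
    "\<And>ts p. (\<And>d. 0 \<le> ts d) \<Longrightarrow> norm (ft_iter ds k ts H p - \<Phi> p)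
      \<le> M * (\<Prod>d\<in>set ds. 10 / \<bar>k d\<bar>) * (\<Sum>d\<in>set ds. weight (1/3) (ts d))"
proof -
  define \<beta> where "\<beta> ts = M * (\<Prod>d\<in>set ds. 10 / \<bar>k d\<bar>) * (\<Sum>d\<in>set ds. weight (1/3) (ts d))"
    for ts :: "dir3 \<Rightarrow> real"
  have incr: "norm (ft_iter ds k ts' H p - ft_iter ds k ts H p) \<le> \<beta> ts"
    if "\<And>d. 0 \<le> ts d" "ts \<le> ts'" for ts ts' p
    unfolding \<beta>_def
    by (rule norm_le_of_admissible[OF admissible_ft_iter_diff[of "[]"]])
       (use assms that in \<open>auto simp: le_fun_def\<close>)
  have lim: "(\<lambda>n. \<beta> (\<lambda>_. real n)) \<longlonglongrightarrow> 0"
    unfolding \<beta>_def using tendsto_mult_right_zero[OF tendsto_weight_sequentially[of "1/3"]]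
    by (simp add: mult.assoc[symmetric])
  have "\<exists>L. \<forall>ts. (\<forall>d. 0 \<le> ts d) \<longrightarrow> norm (ft_iter ds k ts H p - L) \<le> \<beta> ts" for p
    using limit_with_rate[of "\<lambda>ts. ft_iter ds k ts H p", OF incr lim] by metis
  then obtain \<Phi> where \<Phi>: "\<And>p ts. (\<And>d. 0 \<le> ts d) \<Longrightarrow> norm (ft_iter ds k ts H p - \<Phi> p) \<le> \<beta> ts"
    by metis
  have "continuous_on UNIV \<Phi>"
  proof (rule continuous_on_uniform_rate[where F = "\<lambda>n. ft_iter ds k (\<lambda>_. real n) H", OF _ _ lim])
    show "continuous_on UNIV (ft_iter ds k (\<lambda>_. real n) H)" for n
      by (rule continuous_on_ft_iter[OF admissible_continuous[OF assms(1)]])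
    show "dist (ft_iter ds k (\<lambda>_. real n) H p) (\<Phi> p) \<le> \<beta> (\<lambda>_. real n)" for n p
      using \<Phi>[of "\<lambda>_. real n" p] by (simp add: dist_norm)
  qed
  with \<Phi> that show ?thesis unfolding \<beta>_def by blast
qed

lemma ft_iter_ft_dir_swap:
  assumes "d \<notin> set ds" "continuous_on UNIV H"
  shows "ft_iter ds k ts (ft_dir d (k d) (ts d) H) = ft_dir d (k d) (ts d) (ft_iter ds k ts H)"
  using assms by (induction ds) (auto simp: ft_dir_commute continuous_on_ft_iter)

lemma ft_iter_perm:
  assumes "distinct ds" "distinct ds'" "set ds = set ds'" "continuous_on UNIV H"
  shows "ft_iter ds k ts H = ft_iter ds' k ts H"
  using assms(1-3)
proof (induction ds arbitrary: ds')
  case Nil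
  then show ?case by simp
next
  case (Cons d ds)
  then obtain pre post where ds': "ds' = pre @ d # post"
    by (metis list.set_intros(1) split_list)
  with Cons.prems have "d \<notin> set pre" "ft_iter ds k ts H = ft_iter (pre @ post) k ts H"
    by (auto intro!: Cons.IH)
  then show ?case
    by (simp add: ds' ft_iter_append ft_iter_ft_dir_swap continuous_on_ft_iter assms(4))
qed

lemma norm_ft_iter_diff_le:
  assumes "continuous_on UNIV H1" "continuous_on UNIV H2" "\<And>p. norm (H1 p - H2 p) \<le> \<epsilon>"
    and "\<And>d. 0 \<le> ts d"
  shows "norm (ft_iter ds k ts H1 p - ft_iter ds k ts H2 p) \<le> (\<Prod>d\<leftarrow>ds. 2 * ts d) * \<epsilon>"
proof (induction ds arbitrary: p)
  case Nil
  then show ?case using assms(3) by simp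
next
  case (Cons d ds)
  have cont: "continuous_on UNIV (ft_iter ds k ts H1)" "continuous_on UNIV (ft_iter ds k ts H2)"
    using assms(1,2) by (auto intro: continuous_on_ft_iter)
  have "norm (ft_iter (d # ds) k ts H1 p - ft_iter (d # ds) k ts H2 p)
      = norm (ft1 (\<lambda>a. ft_iter ds k ts H1 (set_coord d a p) - ft_iter ds k ts H2 (set_coord d a p)) (k d) (ts d))"
    by (simp add: ft_dir_def ft1_diff_fun continuous_on_line cont)
  also have "\<dots> \<le> 2 * ts d * ((\<Prod>d\<leftarrow>ds. 2 * ts d) * \<epsilon>)"
    by (intro norm_ft1_le Cons.IH assms(4) continuous_on_line continuous_intros cont)
  finally show ?case by (simp add: mult_ac)
qed

lemma ft_iter_partial_limit:
  assumes cont: "continuous_on UNIV \<Psi>" "continuous_on UNIV G"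
    and disj: "set ds2 \<inter> set ds1 = {}"
    and \<Psi>: "\<And>ts q. (\<And>d. 0 \<le> ts d) \<Longrightarrow>
      norm (\<Psi> q - ft_iter ds1 k ts G q) \<le> K1 * (\<Sum>d\<in>set ds1. weight (1/3) (ts d))"
    and L: "\<And>ts. (\<And>d. 0 \<le> ts d) \<Longrightarrow>
      norm (ft_iter (ds2 @ ds1) k ts G p - L) \<le> K * (\<Sum>d\<in>set (ds2 @ ds1). weight (1/3) (ts d))"
    and ts: "\<And>d. 0 \<le> ts d"
  shows "norm (ft_iter ds2 k ts \<Psi> p - L) \<le> K * (\<Sum>d\<in>set ds2. weight (1/3) (ts d))"
proof (rule LIMSEQ_le_const)
  let ?S = "K * (\<Sum>d\<in>set ds2. weight (1/3) (ts d))"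
  let ?c = "(\<Prod>d\<leftarrow>ds2. 2 * ts d) * K1 * card (set ds1) + K * card (set ds1)"
  \<comment> \<open>push the radii of ds1 to infinity; the truncations along ds2 integrate over a fixed
    bounded box, so the uniform approximation of \<Psi> passes through them\<close>
  define tsn where "tsn n d = (if d \<in> set ds1 then real n else ts d)" for n :: nat and d
  show "(\<lambda>n. ?S + ?c * weight (1/3) (real n)) \<longlonglongrightarrow> ?S"
    using tendsto_add[OF tendsto_const tendsto_mult_right_zero[OF tendsto_weight_sequentially]] by simp
  have "norm (ft_iter ds2 k ts \<Psi> p - L) \<le> ?S + ?c * weight (1/3) (real n)" for n
  proof -
    have tsn: "0 \<le> tsn n d" for d using ts by (simp add: tsn_def)
    have sum1: "(\<Sum>d\<in>set ds1. weight (1/3) (tsn n d)) = card (set ds1) * weight (1/3) (real n)"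
      by (simp add: tsn_def)
    have sum2: "(\<Sum>d\<in>set ds2. weight (1/3) (tsn n d)) = (\<Sum>d\<in>set ds2. weight (1/3) (ts d))"
      using disj by (auto simp: tsn_def intro!: sum.cong)
    have "(\<Sum>d\<in>set (ds2 @ ds1). weight (1/3) (tsn n d))
        = (\<Sum>d\<in>set ds2. weight (1/3) (ts d)) + card (set ds1) * weight (1/3) (real n)"
      using disj sum1 sum2 by (simp add: sum.union_disjoint)
    moreover have "ft_iter ds2 k (tsn n) X = ft_iter ds2 k ts X" for X
      by (rule ft_iter_cong) (use disj in \<open>auto simp: tsn_def\<close>)
    then have "ft_iter (ds2 @ ds1) k (tsn n) G p = ft_iter ds2 k ts (ft_iter ds1 k (tsn n) G) p"
      by (simp add: ft_iter_append)
    ultimately have far: "norm (ft_iter ds2 k ts (ft_iter ds1 k (tsn n) G) p - L)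
        \<le> ?S + K * card (set ds1) * weight (1/3) (real n)"
      using L[of "tsn n", OF tsn] by (simp add: distrib_left mult_ac)
    have near: "norm (ft_iter ds2 k ts \<Psi> p - ft_iter ds2 k ts (ft_iter ds1 k (tsn n) G) p)
        \<le> (\<Prod>d\<leftarrow>ds2. 2 * ts d) * (K1 * (card (set ds1) * weight (1/3) (real n)))"
      using \<Psi>[of "tsn n", OF tsn] sum1
      by (intro norm_ft_iter_diff_le cont continuous_on_ft_iter ts) auto
    show ?thesis
      using norm_diff_triangle_le[OF near far] by (simp add: algebra_simps)
  qed
  then show "\<exists>N. \<forall>n\<ge>N. norm (ft_iter ds2 k ts \<Psi> p - L) \<le> ?S + ?c * weight (1/3) (real n)"
    by blast
qed

section \<open>Normal functions are admissible\<close>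

lemma smooth3_pd3:
  assumes "smooth3 f"
  shows "smooth3 (pd3 d f)"
  unfolding smooth3_def
proof
  fix ds
  show "let g = foldr pd3 ds (pd3 d f) in
      continuous_on UNIV (\<lambda>p. g (fst p) (fst (snd p)) (snd (snd p))) \<and>
      (\<forall>x y z. (\<lambda>t. g t y z) field_differentiable at x \<and> (\<lambda>t. g x t z) field_differentiable at y \<and>
        (\<lambda>t. g x y t) field_differentiable at z)"
    using spec[OF assms[unfolded smooth3_def], of "ds @ [d]"] by simp
qed

lemma smooth3_funpow: "smooth3 f \<Longrightarrow> smooth3 ((pd3 d ^^ n) f)"
  by (induction n) (auto intro: smooth3_pd3)

lemma continuous_on_lift3: "smooth3 f \<Longrightarrow> continuous_on UNIV (lift3 f)"
  unfolding smooth3_def lift3_def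
  by (drule spec[of _ "[]"]) (auto intro: continuous_on_of_real simp: Let_def)

lemma has_dir_deriv_lift3:
  assumes "smooth3 f"
  shows "has_dir_deriv d (lift3 f) (lift3 (pd3 d f))"
  unfolding has_dir_deriv_def
proof (intro allI)
  fix p a
  define \<phi> where
    "\<phi> = (\<lambda>b. f (coord DX (set_coord d b p)) (coord DY (set_coord d b p)) (coord DZ (set_coord d b p)))"
  have "\<phi> field_differentiable (at a)"
    using assms unfolding smooth3_def \<phi>_def by (cases d) (auto dest: spec[of _ "[]"])
  then have "((\<lambda>b. complex_of_real (\<phi> b)) has_vector_derivative complex_of_real (deriv \<phi> a)) (at a)"
    by (intro has_vector_derivative_of_real) (simp add: DERIV_deriv_iff_field_differentiable)
  moreover have "lift3 (pd3 d f) (set_coord d a p) = complex_of_real (deriv \<phi> a)"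
    by (cases d) (simp_all add: lift3_def \<phi>_def)
  ultimately show "((\<lambda>b. lift3 f (set_coord d b p)) has_vector_derivative
      lift3 (pd3 d f) (set_coord d a p)) (at a)"
    by (simp add: lift3_def \<phi>_def)
qed

lemma admissible_lift3:
  assumes "smooth3 g" "distinct ds"
    and "\<And>S. S \<subseteq> set ds \<Longrightarrow> wbounded (\<lambda>d. if d \<in> S then 4/3 else e d) M
      (lift3 (foldr pd3 (filter (\<lambda>d. d \<in> S) (rev ds)) g))"
  shows "admissible ds e M (lift3 g)"
  using assms
proof (induction ds arbitrary: e g)
  case Nil
  then show ?case using Nil(3)[of "{}"] by (simp add: continuous_on_lift3)
next
  case (Cons d ds)
  have "admissible ds e M (lift3 g)"
  proof (rule Cons.IH[OF Cons.prems(1)])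
    fix S assume S: "S \<subseteq> set ds"
    then have "d \<notin> S" using Cons.prems(2) by auto
    with S Cons.prems(3)[of S] show "wbounded (\<lambda>d. if d \<in> S then 4/3 else e d) M
        (lift3 (foldr pd3 (filter (\<lambda>d. d \<in> S) (rev ds)) g))"
      by auto
  qed (use Cons.prems in auto)
  moreover have "admissible ds (e(d := 4/3)) M (lift3 (pd3 d g))"
  proof (rule Cons.IH[OF smooth3_pd3[OF Cons.prems(1)]])
    fix S assume S: "S \<subseteq> set ds"
    have "filter (\<lambda>d'. d' \<in> insert d S) (rev (d # ds)) = filter (\<lambda>d. d \<in> S) (rev ds) @ [d]"
      using Cons.prems(2) by (auto intro!: filter_cong)
    moreover have "(\<lambda>d'. if d' \<in> insert d S then 4/3 else e d') = (\<lambda>d'. if d' \<in> S then 4/3 else (e(d := 4/3)) d')"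
      by auto
    ultimately show "wbounded (\<lambda>d'. if d' \<in> S then 4/3 else (e(d := 4/3)) d') M
        (lift3 (foldr pd3 (filter (\<lambda>d. d \<in> S) (rev ds)) (pd3 d g)))"
      using Cons.prems(3)[of "insert d S"] S by (simp add: subset_insertI2)
  qed (use Cons.prems in auto)
  ultimately show ?case
    using has_dir_deriv_lift3[OF Cons.prems(1)] by auto
qed

lemma weight3_ge:
  assumes "\<And>d. 0 \<le> e d" "1 + norm p \<le> R"
  shows "R powr (- (\<Sum>d\<in>UNIV. e d)) \<le> weight3 e p"
proof -
  have R: "0 < R" using assms(2) norm_ge_zero[of p] by linarith
  have "R powr (- (\<Sum>d\<in>UNIV. e d)) = (\<Prod>d\<in>UNIV. R powr (- e d))"
    using R by (simp add: powr_sum[symmetric] sum_negf)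
  also have "\<dots> \<le> weight3 e p"
  proof -
    have "1 + \<bar>coord d p\<bar> \<le> R" for d
      using abs_coord_le_norm[of d p] assms(2) by linarith
    then show ?thesis
      unfolding weight3_def weight_def using assms(1) by (intro prod_mono) (auto intro!: powr_mono2')
  qed
  finally show ?thesis .
qed

lemma wbounded_of_decay:
  assumes cont: "continuous_on UNIV (lift3 g)"
    and decay: "\<And>x y z. 1 < norm (x, y, z) \<Longrightarrow> \<bar>g x y z\<bar> \<le> C / norm (x, y, z) ^ n"
    and e: "\<And>d. 0 \<le> e d" "(\<Sum>d\<in>UNIV. e d) = real n"
  shows "\<exists>M. wbounded e M (lift3 g)"
proof -
  have "compact (lift3 g ` cball 0 1)"
    by (rule compact_continuous_image[OF continuous_on_subset[OF cont]]) auto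
  then obtain B where B: "\<And>q. norm q \<le> 1 \<Longrightarrow> norm (lift3 g q) \<le> B"
    by (metis bounded_iff compact_imp_bounded image_eqI mem_cball_0)
  define M where "M = (max B 0 + max C 0) * 2 ^ n"
  have "norm (lift3 g q) \<le> M * weight3 e q" for q
  proof (cases "norm q \<le> 1")
    case True
    have "2 powr (- real n) \<le> weight3 e q"
      using weight3_ge[of e q 2, OF e(1)] True e(2) by simp
    then have "M * 2 powr (- real n) \<le> M * weight3 e q"
      by (intro mult_left_mono) (auto simp: M_def)
    moreover have "M * 2 powr (- real n) = max B 0 + max C 0"
      by (simp add: M_def powr_minus powr_realpow)
    ultimately show ?thesis using B[OF True] by linarith
  next
    case False
    then have q: "0 < norm q" by linarith
    have "(2 * norm q) powr (- real n) \<le> weight3 e q"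
      using weight3_ge[of e q "2 * norm q", OF e(1)] False e(2) by simp
    then have "M * (2 * norm q) powr (- real n) \<le> M * weight3 e q"
      by (intro mult_left_mono) (auto simp: M_def)
    moreover have "M * (2 * norm q) powr (- real n) = (max B 0 + max C 0) / norm q ^ n"
      using q by (simp add: M_def powr_minus powr_realpow power_mult_distrib field_simps)
    moreover have "norm (lift3 g q) \<le> C / norm q ^ n"
      using decay[of "fst q" "fst (snd q)" "snd (snd q)"] False by (simp add: lift3_def)
    moreover have "C / norm q ^ n \<le> (max B 0 + max C 0) / norm q ^ n"
      by (intro divide_right_mono) auto
    ultimately show ?thesis by linarith
  qed
  then show ?thesis unfolding wbounded_def by blast
qed

lemma normal3_decay:
  assumes "normal3 f"
  obtains C where "\<And>x y z. 1 < norm (x, y, z) \<Longrightarrow>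
    \<bar>mixed_pd i j k f x y z\<bar> \<le> C / norm (x, y, z) ^ (i + j + k + 1)"
proof (cases "i + j + k = 0")
  case True
  then show ?thesis
    using assms that unfolding normal3_def by (auto simp: mixed_pd_def)
next
  case False
  then show ?thesis
    using assms that unfolding normal3_def by (metis One_nat_def Suc_leI neq0_conv)
qed

lemma normal3_admissible:
  assumes "normal3 f"
  obtains M where "admissible [DZ, DY, DX] (\<lambda>_. 1/3) M (lift3 f)"
proof -
  have smooth: "smooth3 f" using assms by (simp add: normal3_def)
  have "\<exists>M. wbounded (\<lambda>d. if d \<in> S then 4/3 else 1/3) M
      (lift3 (foldr pd3 (filter (\<lambda>d. d \<in> S) [DX, DY, DZ]) f))" for S
  proof -
    define i j k :: nat where "i = of_bool (DX \<in> S)" "j = of_bool (DY \<in> S)" "k = of_bool (DZ \<in> S)"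
    have eq: "foldr pd3 (filter (\<lambda>d. d \<in> S) [DX, DY, DZ]) f = mixed_pd i j k f"
      by (cases "DX \<in> S"; cases "DY \<in> S"; cases "DZ \<in> S") (simp_all add: i_j_k_def mixed_pd_def)
    have sum: "(\<Sum>d\<in>UNIV. if d \<in> S then 4/3 else 1/3) = real (i + j + k + 1)"
      by (cases "DX \<in> S"; cases "DY \<in> S"; cases "DZ \<in> S") (simp_all add: i_j_k_def UNIV_dir3)
    obtain C where decay: "\<And>x y z. 1 < norm (x, y, z) \<Longrightarrow>
        \<bar>mixed_pd i j k f x y z\<bar> \<le> C / norm (x, y, z) ^ (i + j + k + 1)"
      using normal3_decay[OF assms] by blast
    have "continuous_on UNIV (lift3 (mixed_pd i j k f))"
      unfolding mixed_pd_def by (intro continuous_on_lift3 smooth3_funpow smooth)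
    from wbounded_of_decay[OF this decay _ sum] show ?thesis
      unfolding eq by simp
  qed
  then obtain M where M: "\<And>S. wbounded (\<lambda>d. if d \<in> S then 4/3 else 1/3) (M S)
      (lift3 (foldr pd3 (filter (\<lambda>d. d \<in> S) [DX, DY, DZ]) f))"
    by metis
  have le: "M S \<le> (\<Sum>S\<in>UNIV. M S)" for S
    using wbounded_nonneg[OF M] by (intro member_le_sum) auto
  have "admissible [DZ, DY, DX] (\<lambda>_. 1/3) (\<Sum>S\<in>UNIV. M S) (lift3 f)"
  proof (rule admissible_lift3[OF smooth])
    fix S
    show "wbounded (\<lambda>d. if d \<in> S then 4/3 else 1/3) (\<Sum>S\<in>UNIV. M S)
        (lift3 (foldr pd3 (filter (\<lambda>d. d \<in> S) (rev [DZ, DY, DX])) f))"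
      using wbounded_mono[OF M le] by simp
  qed simp
  then show ?thesis by (rule that)
qed

locale normal_fourier =
  fixes f :: "real \<Rightarrow> real \<Rightarrow> real \<Rightarrow> real" and k1 k2 k3 :: real
  assumes normal: "normal3 f" and nonzero: "k1 \<noteq> 0" "k2 \<noteq> 0" "k3 \<noteq> 0"
begin

definition freq :: "dir3 \<Rightarrow> real" where
  "freq d = (case d of DX \<Rightarrow> k1 | DY \<Rightarrow> k2 | DZ \<Rightarrow> k3)"

lemma freq_simps [simp]: "freq DX = k1" "freq DY = k2" "freq DZ = k3"
  by (simp_all add: freq_def)

lemma freq_nonzero: "freq d \<noteq> 0"
  using nonzero by (cases d) simp_all

definition ft_limit :: "dir3 list \<Rightarrow> point \<Rightarrow> complex" where
  "ft_limit ds = (SOME \<Phi>. continuous_on UNIV \<Phi> \<and> (\<exists>K. \<forall>ts p. (\<forall>d. 0 \<le> ts d) \<longrightarrow>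
      norm (ft_iter ds freq ts (lift3 f) p - \<Phi> p) \<le> K * (\<Sum>d\<in>set ds. weight (1/3) (ts d))))"

lemma ft_limit_spec:
  assumes "subseq ds [DZ, DY, DX]" "distinct ds"
  shows "continuous_on UNIV (ft_limit ds) \<and> (\<exists>K. \<forall>ts p. (\<forall>d. 0 \<le> ts d) \<longrightarrow>
      norm (ft_iter ds freq ts (lift3 f) p - ft_limit ds p) \<le> K * (\<Sum>d\<in>set ds. weight (1/3) (ts d)))"
proof -
  obtain M where "admissible [DZ, DY, DX] (\<lambda>_. 1/3) M (lift3 f)"
    using normal3_admissible[OF normal] .
  then have adm: "admissible ds (\<lambda>_. 1/3) M (lift3 f)"
    by (rule admissible_subseq[OF assms(1)])
  obtain \<Phi> where "continuous_on UNIV \<Phi>" "\<And>ts p. (\<And>d. 0 \<le> ts d) \<Longrightarrow>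
      norm (ft_iter ds freq ts (lift3 f) p - \<Phi> p)
        \<le> M * (\<Prod>d\<in>set ds. 10 / \<bar>freq d\<bar>) * (\<Sum>d\<in>set ds. weight (1/3) (ts d))"
    by (rule ft_iter_limit[OF adm assms(2), where k = freq]) (auto simp: freq_nonzero)
  then have "\<exists>\<Phi>. continuous_on UNIV \<Phi> \<and> (\<exists>K. \<forall>ts p. (\<forall>d. 0 \<le> ts d) \<longrightarrow>
      norm (ft_iter ds freq ts (lift3 f) p - \<Phi> p) \<le> K * (\<Sum>d\<in>set ds. weight (1/3) (ts d)))"
    by blast
  from someI_ex[OF this] show ?thesis
    unfolding ft_limit_def .
qed

lemma continuous_ft_limit:
  "subseq ds [DZ, DY, DX] \<Longrightarrow> distinct ds \<Longrightarrow> continuous_on UNIV (ft_limit ds)"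
  using ft_limit_spec by blast

lemma ft_limit_rate:
  assumes "subseq ds [DZ, DY, DX]" "distinct ds"
  obtains K where "\<And>ts p. (\<And>d. 0 \<le> ts d) \<Longrightarrow>
    norm (ft_iter ds freq ts (lift3 f) p - ft_limit ds p) \<le> K * (\<Sum>d\<in>set ds. weight (1/3) (ts d))"
  using ft_limit_spec[OF assms] by blast

lemma tendsto_ft_iter1: "((\<lambda>r. ft_iter [d] freq (\<lambda>_. r) (lift3 f) p) \<longlongrightarrow> ft_limit [d] p) at_top"
proof -
  have "subseq [d] [DZ, DY, DX]" by (cases d) simp_all
  then obtain K where K: "\<And>ts p. (\<And>d. 0 \<le> ts d) \<Longrightarrow>
      norm (ft_iter [d] freq ts (lift3 f) p - ft_limit [d] p) \<le> K * (\<Sum>d\<in>set [d]. weight (1/3) (ts d))"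
    using ft_limit_rate[OF _ distinct_singleton] by blast
  show ?thesis
    by (rule tendsto_at_top_of_rate[where e = "1/3" and K = K]) (use K[of "\<lambda>_. _"] in simp_all)
qed

lemma tendsto_ft_iter2:
  assumes "d1 \<noteq> d2" "subseq [d1, d2] [DZ, DY, DX]"
  shows "((\<lambda>(r, s). ft_iter [d1, d2] freq (\<lambda>d. if d = d1 then r else s) (lift3 f) p)
    \<longlongrightarrow> ft_limit [d1, d2] p) (at_top \<times>\<^sub>F at_top)"
proof -
  obtain K where K: "\<And>ts p. (\<And>d. 0 \<le> ts d) \<Longrightarrow> norm (ft_iter [d1, d2] freq ts (lift3 f) p
      - ft_limit [d1, d2] p) \<le> K * (\<Sum>d\<in>set [d1, d2]. weight (1/3) (ts d))"
    using ft_limit_rate[OF assms(2)] assms(1) by auto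
  show ?thesis
    by (rule tendsto_at_top2_of_rate[where e = "1/3" and K = K])
       (use K[of "\<lambda>d. if d = d1 then _ else _"] assms(1) in simp_all)
qed

lemma tendsto_ft_iter3:
  "((\<lambda>(r, s, t). ft_iter [DZ, DY, DX] freq (\<lambda>d. if d = DZ then r else if d = DY then s else t) (lift3 f) p)
    \<longlongrightarrow> ft_limit [DZ, DY, DX] p) (at_top \<times>\<^sub>F (at_top \<times>\<^sub>F at_top))"
proof -
  obtain K where K: "\<And>ts p. (\<And>d. 0 \<le> ts d) \<Longrightarrow> norm (ft_iter [DZ, DY, DX] freq ts (lift3 f) p
      - ft_limit [DZ, DY, DX] p) \<le> K * (\<Sum>d\<in>set [DZ, DY, DX]. weight (1/3) (ts d))"
    using ft_limit_rate[of "[DZ, DY, DX]"] by auto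
  show ?thesis
    by (rule tendsto_at_top3_of_rate[where e = "1/3" and K = K])
       (use K[of "\<lambda>d. if d = DZ then _ else if d = DY then _ else _"] in \<open>simp_all add: add.assoc\<close>)
qed

lemma ft_iter_ft_limit_rate:
  assumes "subseq ds1 [DZ, DY, DX]" "distinct (ds2 @ ds1)" "set (ds2 @ ds1) = {DX, DY, DZ}"
  obtains K where "\<And>ts p. (\<And>d. 0 \<le> ts d) \<Longrightarrow>
    norm (ft_iter ds2 freq ts (ft_limit ds1) p - ft_limit [DZ, DY, DX] p)
      \<le> K * (\<Sum>d\<in>set ds2. weight (1/3) (ts d))"
proof -
  have ds1: "distinct ds1" using assms(2) by simp
  have cont: "continuous_on UNIV (lift3 f)"
    using normal continuous_on_lift3 by (simp add: normal3_def)
  obtain K1 where K1: "\<And>ts p. (\<And>d. 0 \<le> ts d) \<Longrightarrow> norm (ft_iter ds1 freq ts (lift3 f) p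
      - ft_limit ds1 p) \<le> K1 * (\<Sum>d\<in>set ds1. weight (1/3) (ts d))"
    using ft_limit_rate[OF assms(1) ds1] by blast
  obtain K where K: "\<And>ts p. (\<And>d. 0 \<le> ts d) \<Longrightarrow> norm (ft_iter [DZ, DY, DX] freq ts (lift3 f) p
      - ft_limit [DZ, DY, DX] p) \<le> K * (\<Sum>d\<in>set [DZ, DY, DX]. weight (1/3) (ts d))"
    using ft_limit_rate[of "[DZ, DY, DX]"] by auto
  have "ft_iter (ds2 @ ds1) freq ts (lift3 f) = ft_iter [DZ, DY, DX] freq ts (lift3 f)" for ts
    by (rule ft_iter_perm) (use assms(2,3) cont in auto)
  moreover have "set (ds2 @ ds1) = set [DZ, DY, DX]"
    using assms(3) by auto
  ultimately have L: "norm (ft_iter (ds2 @ ds1) freq ts (lift3 f) p - ft_limit [DZ, DY, DX] p)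
      \<le> K * (\<Sum>d\<in>set (ds2 @ ds1). weight (1/3) (ts d))" if "\<And>d. 0 \<le> ts d" for ts p
    using K[of ts p, OF that] by simp
  have disj: "set ds2 \<inter> set ds1 = {}" using assms(2) by auto
  have "norm (ft_iter ds2 freq ts (ft_limit ds1) p - ft_limit [DZ, DY, DX] p)
      \<le> K * (\<Sum>d\<in>set ds2. weight (1/3) (ts d))" if "\<And>d. 0 \<le> ts d" for ts p
    using K1 L that
    by (intro ft_iter_partial_limit[OF continuous_ft_limit[OF assms(1) ds1] cont disj])
       (auto simp: norm_minus_commute)
  then show ?thesis by (rule that)
qed

lemma tendsto_ft_iter1_ft_limit:
  assumes "subseq ds1 [DZ, DY, DX]" "distinct (d # ds1)" "set (d # ds1) = {DX, DY, DZ}"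
  shows "((\<lambda>r. ft_iter [d] freq (\<lambda>_. r) (ft_limit ds1) p) \<longlongrightarrow> ft_limit [DZ, DY, DX] p) at_top"
proof -
  obtain K where K: "\<And>ts p. (\<And>d. 0 \<le> ts d) \<Longrightarrow>
      norm (ft_iter [d] freq ts (ft_limit ds1) p - ft_limit [DZ, DY, DX] p)
        \<le> K * (\<Sum>d\<in>set [d]. weight (1/3) (ts d))"
    using ft_iter_ft_limit_rate[of ds1 "[d]"] assms by auto
  show ?thesis
    by (rule tendsto_at_top_of_rate[where e = "1/3" and K = K]) (use K[of "\<lambda>_. _"] in simp_all)
qed

lemma tendsto_ft_iter2_ft_limit:
  assumes "subseq ds1 [DZ, DY, DX]" "distinct (d1 # d2 # ds1)" "set (d1 # d2 # ds1) = {DX, DY, DZ}"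
  shows "((\<lambda>(r, s). ft_iter [d1, d2] freq (\<lambda>d. if d = d1 then r else s) (ft_limit ds1) p)
    \<longlongrightarrow> ft_limit [DZ, DY, DX] p) (at_top \<times>\<^sub>F at_top)"
proof -
  obtain K where K: "\<And>ts p. (\<And>d. 0 \<le> ts d) \<Longrightarrow>
      norm (ft_iter [d1, d2] freq ts (ft_limit ds1) p - ft_limit [DZ, DY, DX] p)
        \<le> K * (\<Sum>d\<in>set [d1, d2]. weight (1/3) (ts d))"
    using ft_iter_ft_limit_rate[of ds1 "[d1, d2]"] assms by auto
  have "d1 \<noteq> d2" using assms(2) by simp
  then show ?thesis
    by (intro tendsto_at_top2_of_rate[where e = "1/3" and K = K])
       (use K[of "\<lambda>d. if d = d1 then _ else _"] in simp_all)
qed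

lemma tendsto_ft1_x: "((\<lambda>r. ft1 (\<lambda>x. complex_of_real (f x y z)) k1 r) \<longlongrightarrow> ft_limit [DX] (0, y, z)) at_top"
  using tendsto_ft_iter1[of DX "(0, y, z)", unfolded ft_iter_single] by (simp add: lift3_def)

lemma tendsto_ft1_y: "((\<lambda>r. ft1 (\<lambda>y. complex_of_real (f x y z)) k2 r) \<longlongrightarrow> ft_limit [DY] (x, 0, z)) at_top"
  using tendsto_ft_iter1[of DY "(x, 0, z)", unfolded ft_iter_single] by (simp add: lift3_def)

lemma tendsto_ft1_z: "((\<lambda>r. ft1 (\<lambda>z. complex_of_real (f x y z)) k3 r) \<longlongrightarrow> ft_limit [DZ] (x, y, 0)) at_top"
  using tendsto_ft_iter1[of DZ "(x, y, 0)", unfolded ft_iter_single] by (simp add: lift3_def)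

lemma tendsto_ft2_xy: "((\<lambda>(r, s). ft2 (\<lambda>x y. complex_of_real (f x y z)) k1 k2 r s)
    \<longlongrightarrow> ft_limit [DY, DX] (0, 0, z)) (at_top \<times>\<^sub>F at_top)"
  using tendsto_ft_iter2[of DY DX "(0, 0, z)", unfolded ft_iter_pair] by (simp add: lift3_def)

lemma tendsto_ft2_xz: "((\<lambda>(r, s). ft2 (\<lambda>x z. complex_of_real (f x y z)) k1 k3 r s)
    \<longlongrightarrow> ft_limit [DZ, DX] (0, y, 0)) (at_top \<times>\<^sub>F at_top)"
  using tendsto_ft_iter2[of DZ DX "(0, y, 0)", unfolded ft_iter_pair] by (simp add: lift3_def)

lemma tendsto_ft2_yz: "((\<lambda>(r, s). ft2 (\<lambda>y z. complex_of_real (f x y z)) k2 k3 r s)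
    \<longlongrightarrow> ft_limit [DZ, DY] (x, 0, 0)) (at_top \<times>\<^sub>F at_top)"
  using tendsto_ft_iter2[of DZ DY "(x, 0, 0)", unfolded ft_iter_pair] by (simp add: lift3_def)

lemma tendsto_ft3_xyz: "((\<lambda>(r, s, t). ft3 (\<lambda>x y z. complex_of_real (f x y z)) k1 k2 k3 r s t)
    \<longlongrightarrow> ft_limit [DZ, DY, DX] (0, 0, 0)) (at_top \<times>\<^sub>F (at_top \<times>\<^sub>F at_top))"
  using tendsto_ft_iter3[of "(0, 0, 0)", unfolded ft_iter_triple] by (simp add: lift3_def)

lemma tendsto_ft2_yz_ft_limit_x: "((\<lambda>(r, s). ft2 (\<lambda>y z. ft_limit [DX] (0, y, z)) k2 k3 r s)
    \<longlongrightarrow> ft_limit [DZ, DY, DX] (0, 0, 0)) (at_top \<times>\<^sub>F at_top)"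
  using tendsto_ft_iter2_ft_limit[of "[DX]" DZ DY "(0, 0, 0)", unfolded ft_iter_pair] by (simp add: insert_commute)

lemma tendsto_ft2_xz_ft_limit_y: "((\<lambda>(r, s). ft2 (\<lambda>x z. ft_limit [DY] (x, 0, z)) k1 k3 r s)
    \<longlongrightarrow> ft_limit [DZ, DY, DX] (0, 0, 0)) (at_top \<times>\<^sub>F at_top)"
  using tendsto_ft_iter2_ft_limit[of "[DY]" DZ DX "(0, 0, 0)", unfolded ft_iter_pair] by (simp add: insert_commute)

lemma tendsto_ft2_xy_ft_limit_z: "((\<lambda>(r, s). ft2 (\<lambda>x y. ft_limit [DZ] (x, y, 0)) k1 k2 r s)
    \<longlongrightarrow> ft_limit [DZ, DY, DX] (0, 0, 0)) (at_top \<times>\<^sub>F at_top)"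
  using tendsto_ft_iter2_ft_limit[of "[DZ]" DY DX "(0, 0, 0)", unfolded ft_iter_pair] by (simp add: insert_commute)

lemma tendsto_ft1_z_ft_limit_xy: "((\<lambda>r. ft1 (\<lambda>z. ft_limit [DY, DX] (0, 0, z)) k3 r)
    \<longlongrightarrow> ft_limit [DZ, DY, DX] (0, 0, 0)) at_top"
  using tendsto_ft_iter1_ft_limit[of "[DY, DX]" DZ "(0, 0, 0)", unfolded ft_iter_single] by (simp add: insert_commute)

lemma tendsto_ft1_y_ft_limit_xz: "((\<lambda>r. ft1 (\<lambda>y. ft_limit [DZ, DX] (0, y, 0)) k2 r)
    \<longlongrightarrow> ft_limit [DZ, DY, DX] (0, 0, 0)) at_top"
  using tendsto_ft_iter1_ft_limit[of "[DZ, DX]" DY "(0, 0, 0)", unfolded ft_iter_single] by (simp add: insert_commute)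

lemma tendsto_ft1_x_ft_limit_yz: "((\<lambda>r. ft1 (\<lambda>x. ft_limit [DZ, DY] (x, 0, 0)) k1 r)
    \<longlongrightarrow> ft_limit [DZ, DY, DX] (0, 0, 0)) at_top"
  using tendsto_ft_iter1_ft_limit[of "[DZ, DY]" DX "(0, 0, 0)", unfolded ft_iter_single] by (simp add: insert_commute)

end

theorem lemma18:
  fixes f :: "real \<Rightarrow> real \<Rightarrow> real \<Rightarrow> real" and k1 k2 k3 :: real
  assumes "normal3 f" and "k1 \<noteq> 0" and "k2 \<noteq> 0" and "k3 \<noteq> 0"
  defines "A \<equiv> \<lambda>y z. fourier1 (\<lambda>x. complex_of_real (f x y z)) k1"
      and "B \<equiv> \<lambda>x z. fourier1 (\<lambda>y. complex_of_real (f x y z)) k2"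
      and "C \<equiv> \<lambda>x y. fourier1 (\<lambda>z. complex_of_real (f x y z)) k3"
      and "F \<equiv> \<lambda>z. fourier2 (\<lambda>x y. complex_of_real (f x y z)) k1 k2"
      and "G \<equiv> \<lambda>y. fourier2 (\<lambda>x z. complex_of_real (f x y z)) k1 k3"
      and "H \<equiv> \<lambda>x. fourier2 (\<lambda>y z. complex_of_real (f x y z)) k2 k3"
  shows "(\<forall>y z. ((\<lambda>r. ft1 (\<lambda>x. complex_of_real (f x y z)) k1 r) \<longlongrightarrow> A y z) at_top) \<and>
         (\<forall>x z. ((\<lambda>r. ft1 (\<lambda>y. complex_of_real (f x y z)) k2 r) \<longlongrightarrow> B x z) at_top) \<and>
         (\<forall>x y. ((\<lambda>r. ft1 (\<lambda>z. complex_of_real (f x y z)) k3 r) \<longlongrightarrow> C x y) at_top) \<and>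
         (\<forall>z. ((\<lambda>(r, s). ft2 (\<lambda>x y. complex_of_real (f x y z)) k1 k2 r s) \<longlongrightarrow> F z)
                 (at_top \<times>\<^sub>F at_top)) \<and>
         (\<forall>y. ((\<lambda>(r, s). ft2 (\<lambda>x z. complex_of_real (f x y z)) k1 k3 r s) \<longlongrightarrow> G y)
                 (at_top \<times>\<^sub>F at_top)) \<and>
         (\<forall>x. ((\<lambda>(r, s). ft2 (\<lambda>y z. complex_of_real (f x y z)) k2 k3 r s) \<longlongrightarrow> H x)
                 (at_top \<times>\<^sub>F at_top)) \<and>
         (\<exists>L. ((\<lambda>(r, s, t). ft3 (\<lambda>x y z. complex_of_real (f x y z)) k1 k2 k3 r s t) \<longlongrightarrow> L)
                 (at_top \<times>\<^sub>F (at_top \<times>\<^sub>F at_top)) \<and>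
              ((\<lambda>(r, s). ft2 A k2 k3 r s) \<longlongrightarrow> L) (at_top \<times>\<^sub>F at_top) \<and>
              ((\<lambda>(r, s). ft2 B k1 k3 r s) \<longlongrightarrow> L) (at_top \<times>\<^sub>F at_top) \<and>
              ((\<lambda>(r, s). ft2 C k1 k2 r s) \<longlongrightarrow> L) (at_top \<times>\<^sub>F at_top) \<and>
              ((\<lambda>r. ft1 F k3 r) \<longlongrightarrow> L) at_top \<and>
              ((\<lambda>r. ft1 G k2 r) \<longlongrightarrow> L) at_top \<and>
              ((\<lambda>r. ft1 H k1 r) \<longlongrightarrow> L) at_top)"
proof -
  interpret normal_fourier f k1 k2 k3
    using assms(1-4) by unfold_locales
  have "A = (\<lambda>y z. ft_limit [DX] (0, y, z))" "B = (\<lambda>x z. ft_limit [DY] (x, 0, z))"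
    "C = (\<lambda>x y. ft_limit [DZ] (x, y, 0))"
    unfolding assms(5-7) by (intro ext fourier1_eqI tendsto_ft1_x tendsto_ft1_y tendsto_ft1_z)+
  moreover have "F = (\<lambda>z. ft_limit [DY, DX] (0, 0, z))" "G = (\<lambda>y. ft_limit [DZ, DX] (0, y, 0))"
    "H = (\<lambda>x. ft_limit [DZ, DY] (x, 0, 0))"
    unfolding assms(8-10) by (intro ext fourier2_eqI tendsto_ft2_xy tendsto_ft2_xz tendsto_ft2_yz)+
  ultimately show ?thesis
    using tendsto_ft1_x tendsto_ft1_y tendsto_ft1_z tendsto_ft2_xy tendsto_ft2_xz tendsto_ft2_yz
      tendsto_ft3_xyz tendsto_ft2_yz_ft_limit_x tendsto_ft2_xz_ft_limit_y tendsto_ft2_xy_ft_limit_z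
      tendsto_ft1_z_ft_limit_xy tendsto_ft1_y_ft_limit_xz tendsto_ft1_x_ft_limit_yz
    by blast
qed

end
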